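(* Let $\mathbf S$ be an SRRW in $\mathbb{R}^d$ with parameter $\alpha\in[0,1/2]$ and step distribution $\mu\ne\delta_{\mathbf 0}$ satisfying $\mathbb E\|\mathbf X_1\|^{2+\delta}<\infty$ for some $\delta>0$ and $\mathbb E\mathbf X_1=\mathbf 0$. Then for every $\nu\in(0,\delta/(4+2\delta))$, $$\lim_{n\to\infty}n^{\nu}\max\big\{|\Delta_n(\|\mathbf x\|^2)|,\ |\Delta_n(\|\mathbf x\|^{2+\delta/2})|,\ \|\Delta_n(\mathbf x\mathbf x^T)\|\big\}=0$$ almost surely and in $L^1(\mathbb P)$.
   Context: SRRW: $\mu$ a probability measure on $\mathbb{R}^d$, $\alpha\in[0,1]$; $(\xi_n)_{n\ge2}$ i.i.d. Bernoulli($\alpha$), $(U[n])_{n\ge1}$ independent with $U[n]$ uniform on $\{1,\dots,n\}$. Sample $\mathbf X_1\sim\mu$; for $n\ge1$, if $\xi_{n+1}=1$ set $\mathbf X_{n+1}=\mathbf X_{U[n]}$, else sample $\mathbf X_{n+1}\sim\mu$ independently. For a $\mu$-integrable function $g$, $\Delta_n(g):=\frac1n\sum_{i=1}^n g(\mathbf X_i)-\mathbb E g(\mathbf X_1)$; here $\Delta_n(\|\mathbf x\|^q)$ means $\Delta_n(g)$ for $g(\mathbf x)=\|\mathbf x\|^q$. $\Delta_n(\mathbf x\mathbf x^T)$ is the $d\times d$ matrix with entries $\Delta_n(x(i)x(j))$ ($x(i)$ the $i$-th coordinate), and $\|\Delta_n(\mathbf x\mathbf x^T)\|$ is its Frobenius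 norm. *)

theory Defs
  imports "HOL-Probability.Probability"
begin

text \<open>Index set for the driving randomness: innovations Y_n (n >= 1),
  coins xi_n (n >= 2), uniform indices U_n (n >= 1).\<close>

definition srrw_index :: "(nat + nat + nat) set" where
  "srrw_index = Inl ` {1..} \<union> Inr ` Inl ` {2..} \<union> Inr ` Inr ` {1..}"

definition srrw_gen ::
  "'a measure \<Rightarrow> (nat \<Rightarrow> 'a \<Rightarrow> real ^ 'd) \<Rightarrow> (nat \<Rightarrow> 'a \<Rightarrow> bool)
   \<Rightarrow> (nat \<Rightarrow> 'a \<Rightarrow> nat) \<Rightarrow> nat + nat + nat \<Rightarrow> 'a set set" where
  "srrw_gen M Y \<xi> U i = (case i of
      Inl n \<Rightarrow> {Y n -` A \<inter> space M | A. A \<in> sets borel}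
    | Inr (Inl n) \<Rightarrow> {\<xi> n -` A \<inter> space M | A. A \<in> sets (count_space UNIV)}
    | Inr (Inr n) \<Rightarrow> {U n -` A \<inter> space M | A. A \<in> sets (count_space UNIV)})"

definition srrw ::
  "'a measure \<Rightarrow> (real ^ 'd) measure \<Rightarrow> real \<Rightarrow> (nat \<Rightarrow> 'a \<Rightarrow> real ^ 'd)
   \<Rightarrow> (nat \<Rightarrow> 'a \<Rightarrow> bool) \<Rightarrow> (nat \<Rightarrow> 'a \<Rightarrow> nat) \<Rightarrow> (nat \<Rightarrow> 'a \<Rightarrow> real ^ 'd) \<Rightarrow> bool" where
  "srrw M \<mu> \<alpha> Y \<xi> U X \<longleftrightarrow>
     prob_space M \<and> prob_space \<mu> \<and> sets \<mu> = sets borel \<and> 0 \<le> \<alpha> \<and> \<alpha> \<le> 1 \<and>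
     (\<forall>n\<ge>1. Y n \<in> borel_measurable M \<and> distr M borel (Y n) = \<mu>) \<and>
     (\<forall>n\<ge>2. \<xi> n \<in> measurable M (count_space UNIV) \<and>
             distr M (count_space UNIV) (\<xi> n) = measure_pmf (bernoulli_pmf \<alpha>)) \<and>
     (\<forall>n\<ge>1. U n \<in> measurable M (count_space UNIV) \<and>
             distr M (count_space UNIV) (U n) = measure_pmf (pmf_of_set {1..n})) \<and>
     prob_space.indep_sets M (srrw_gen M Y \<xi> U) srrw_index \<and>
     (\<forall>\<omega>\<in>space M. X 1 \<omega> = Y 1 \<omega>) \<and>
     (\<forall>n\<ge>1. \<forall>\<omega>\<in>space M.
        X (Suc n) \<omega> = (if \<xi> (Suc n) \<omega> then X (U n \<omega>) \<omega> else Y (Suc n) \<omega>))"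

definition Delta ::
  "(real ^ 'd) measure \<Rightarrow> (nat \<Rightarrow> 'a \<Rightarrow> real ^ 'd) \<Rightarrow> (real ^ 'd \<Rightarrow> real) \<Rightarrow> nat \<Rightarrow> 'a \<Rightarrow> real" where
  "Delta \<mu> X g n \<omega> = (\<Sum>i=1..n. g (X i \<omega>)) / real n - (\<integral>x. g x \<partial>\<mu>)"

definition Delta_cov_frob ::
  "(real ^ 'd) measure \<Rightarrow> (nat \<Rightarrow> 'a \<Rightarrow> real ^ 'd) \<Rightarrow> nat \<Rightarrow> 'a \<Rightarrow> real" where
  "Delta_cov_frob \<mu> X n \<omega> =
     sqrt (\<Sum>i\<in>UNIV. \<Sum>j\<in>UNIV. (Delta \<mu> X (\<lambda>x. x $ i * x $ j) n \<omega>)\<^sup>2)"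

end

theory Submission
  imports Defs "HOL-Real_Asymp.Real_Asymp"
begin

text \<open>Step \<open>i\<close> copies the fresh sample \<open>Y\<^bsub>a(i)\<^esub>\<close> of its ancestor \<open>a(i)\<close>, found by following the
  repetition pointers back, and the genealogy \<open>a\<close> is independent of the fresh samples. Hence for a
  centered bounded \<open>f\<close>, \<open>E f(X\<^sub>i) f(X\<^sub>j) = E f\<^sup>2 \<cdot> P(a(i) = a(j))\<close>, and the expected number
  \<open>c\<^sub>n\<close> of pairs \<open>i, j \<le> n\<close> with a common ancestor satisfies \<open>c\<^bsub>n+1\<^esub> = (1 + 2\<alpha>/n) c\<^sub>n + 1\<close>,
  so \<open>c\<^sub>n \<le> n H\<^sub>n\<close> when \<open>\<alpha> \<le> 1/2\<close>.

  For an observable with a finite moment of order \<open>1 < p \<le> 2\<close>, truncate at \<open>2\<^bsup>L/p\<^esup>\<close> on the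
  dyadic block \<open>n \<le> 2\<^sup>L\<close>. Outside events of summable probability no value in the block exceeds
  the truncation level, and dyadic chaining turns the second-moment bound into a maximal
  inequality for the truncated sums. Borel-Cantelli over the blocks gives
  \<open>S\<^sub>n = O(n\<^bsup>1-v\<^esup> + n\<^bsup>1/p\<^esup>)\<close> almost surely for every \<open>v < 1 - 1/p\<close>, and the same
  decomposition gives \<open>E|S\<^sub>n| = O(n\<^bsup>1/p\<^esup> (log n)\<^bsup>1/2\<^esup>)\<close>. The observables \<open>|x|\<^sup>2\<close>,
  \<open>|x|\<^bsup>2+\<delta>/2\<^esup>\<close> and \<open>x\<^sub>i x\<^sub>j\<close> have moments of order \<open>p = (4 + 2\<delta>)/(4 + \<delta>)\<close>, for which
  \<open>1 - 1/p = \<delta>/(4 + 2\<delta>)\<close>.\<close>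

primrec dyadic_square_sum :: "(nat \<Rightarrow> real) \<Rightarrow> nat \<Rightarrow> nat \<Rightarrow> real" where
  "dyadic_square_sum s 0 lo = (s (lo + 1) - s lo)\<^sup>2"
| "dyadic_square_sum s (Suc L) lo =
     (s (lo + 2 ^ Suc L) - s lo)\<^sup>2 + dyadic_square_sum s L lo + dyadic_square_sum s L (lo + 2 ^ L)"

lemma dyadic_square_sum_nonneg: "0 \<le> dyadic_square_sum s L lo"
  by (induction L arbitrary: lo) auto

lemma square_increment_le_dyadic_square_sum:
  "(s (lo + 2 ^ L) - s lo)\<^sup>2 \<le> dyadic_square_sum s L lo"
  by (cases L) (auto intro: add_nonneg_nonneg dyadic_square_sum_nonneg)

lemma power2_add_le_weighted:
  fixes x y c :: real
  assumes "0 < c"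
  shows "(x + y)\<^sup>2 \<le> (1 + c) * x\<^sup>2 + (1 + 1 / c) * y\<^sup>2"
proof -
  have "c * ((1 + c) * x\<^sup>2 + (1 + 1 / c) * y\<^sup>2 - (x + y)\<^sup>2) = (c * x - y)\<^sup>2"
    using assms by (simp add: field_simps power2_eq_square)
  then show ?thesis
    using assms by (metis diff_ge_0_iff_ge zero_le_mult_iff zero_le_power2 not_less)
qed

text \<open>Chaining: an increment over \<open>[lo, lo + t]\<close> with \<open>t \<le> 2^L\<close> is a sum of at most
  \<open>L + 1\<close> dyadic increments, one per level, and Cauchy-Schwarz costs the factor \<open>L + 1\<close>.\<close>

lemma dyadic_chaining:
  assumes "t \<le> 2 ^ L"
  shows "(s (lo + t) - s lo)\<^sup>2 \<le> (real L + 1) * dyadic_square_sum s L lo"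
  using assms
proof (induction L arbitrary: lo t)
  case 0
  then have "t = 0 \<or> t = 1" by auto
  then show ?case by (auto intro: dyadic_square_sum_nonneg)
next
  case (Suc L)
  let ?R = "dyadic_square_sum s"
  show ?case
  proof (cases "t \<le> 2 ^ L")
    case True
    have "(s (lo + t) - s lo)\<^sup>2 \<le> (real L + 1) * ?R L lo" by (rule Suc.IH[OF True])
    also have "\<dots> \<le> (real (Suc L) + 1) * ?R (Suc L) lo"
      using dyadic_square_sum_nonneg[of s] by (intro mult_mono) auto
    finally show ?thesis .
  next
    case False
    define t' where "t' = t - 2 ^ L"
    have t': "t = 2 ^ L + t'" "t' \<le> 2 ^ L" using False Suc.prems by (auto simp: t'_def)
    define x where "x = s (lo + 2 ^ L) - s lo"
    define y where "y = s (lo + 2 ^ L + t') - s (lo + 2 ^ L)"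
    have x: "x\<^sup>2 \<le> ?R L lo" unfolding x_def by (rule square_increment_le_dyadic_square_sum)
    have y: "y\<^sup>2 \<le> (real L + 1) * ?R L (lo + 2 ^ L)" unfolding y_def by (rule Suc.IH[OF t'(2)])
    have "(x + y)\<^sup>2 \<le> (1 + (real L + 1)) * x\<^sup>2 + (1 + 1 / (real L + 1)) * y\<^sup>2"
      by (rule power2_add_le_weighted) simp
    also have "\<dots> = (real L + 2) * x\<^sup>2 + (real L + 2) / (real L + 1) * y\<^sup>2"
      by (simp add: field_simps)
    also have "\<dots> \<le> (real L + 2) * ?R L lo + (real L + 2) * ?R L (lo + 2 ^ L)"
    proof (rule add_mono)
      show "(real L + 2) * x\<^sup>2 \<le> (real L + 2) * ?R L lo" using x by (rule mult_left_mono) simp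
      have "(real L + 2) / (real L + 1) * y\<^sup>2 \<le>
          (real L + 2) / (real L + 1) * ((real L + 1) * ?R L (lo + 2 ^ L))"
        using y by (rule mult_left_mono) simp
      then show "(real L + 2) / (real L + 1) * y\<^sup>2 \<le> (real L + 2) * ?R L (lo + 2 ^ L)" by simp
    qed
    also have "\<dots> \<le> (real (Suc L) + 1) * ?R (Suc L) lo"
    proof -
      have "?R L lo + ?R L (lo + 2 ^ L) \<le> ?R (Suc L) lo" by simp
      from mult_left_mono[OF this, of "real L + 2"] show ?thesis by (simp add: algebra_simps)
    qed
    finally show ?thesis by (simp add: x_def y_def t' add.assoc)
  qed
qed

lemma sum_powers_of_two_below_le:
  fixes y :: real
  assumes "0 \<le> y"
  shows "(\<Sum>L | L < N \<and> 2 ^ L < y. (2::real) ^ L) \<le> 2 * y"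
proof (cases "{L. L < N \<and> 2 ^ L < y} = {}")
  case False
  define m where "m = Max {L. L < N \<and> 2 ^ L < y}"
  have fin: "finite {L. L < N \<and> 2 ^ L < y}" by simp
  have m: "m \<in> {L. L < N \<and> 2 ^ L < y}" "\<And>L. L \<in> {L. L < N \<and> 2 ^ L < y} \<Longrightarrow> L \<le> m"
    unfolding m_def using Max_in[OF fin False] Max_ge[OF fin] by auto
  have "(\<Sum>L | L < N \<and> 2 ^ L < y. (2::real) ^ L) \<le> (\<Sum>L\<le>m. 2 ^ L)"
    using m(2) by (intro sum_mono2) auto
  also have "\<dots> = 2 ^ Suc m - 1" by (induction m) auto
  finally show ?thesis using m(1) by simp
next
  case True
  then show ?thesis using assms by (simp only: sum.empty)
qed

lemma dyadic_bracket:
  assumes "2 \<le> n"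
  obtains L where "1 \<le> L" "2 ^ (L - 1) < n" "n \<le> (2::nat) ^ L"
proof -
  define L where "L = (LEAST L. n \<le> (2::nat) ^ L)"
  have n_le: "n \<le> 2 ^ L" unfolding L_def by (rule LeastI[of _ n]) (simp add: less_imp_le)
  then have "1 \<le> L" using assms by (cases L) auto
  moreover have "\<not> n \<le> 2 ^ (L - 1)"
    unfolding L_def by (rule not_less_Least) (use \<open>1 \<le> L\<close> in \<open>simp add: L_def[symmetric]\<close>)
  ultimately show thesis using n_le that by simp
qed

lemma harm_le_one_plus_ln: "1 \<le> n \<Longrightarrow> harm n \<le> 1 + ln (real n)"
  using euler_mascheroni_sequence_decreasing[of 1 n] by (simp add: harm_def)

lemma half_two_powr_le_powr:
  fixes e :: real
  assumes L: "1 \<le> L" and n: "2 ^ (L - 1) < n" and e: "0 \<le> e" "e \<le> 1"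
  shows "2 powr (real L * e) / 2 \<le> real n powr e"
proof -
  have "2 powr (real L * e) = 2 powr ((real L - 1) * e) * 2 powr e"
    by (simp add: powr_add[symmetric] algebra_simps)
  also have "\<dots> \<le> 2 powr ((real L - 1) * e) * 2"
    using powr_mono[of e 1 2] e by (intro mult_left_mono) auto
  finally have "2 powr (real L * e) / 2 \<le> 2 powr ((real L - 1) * e)" by simp
  also have "\<dots> = real (2 ^ (L - 1)) powr e"
    using L by (simp add: powr_powr of_nat_diff powr_realpow[symmetric])
  also have "\<dots> \<le> real n powr e" using n e by (intro powr_mono2) auto
  finally show ?thesis .
qed

lemma powr_mult_powr_divide_self: "0 < (x::real) \<Longrightarrow> x powr a * x powr b / x = x powr (a + b - 1)"
  by (simp add: powr_diff powr_add)

lemma mult_root_powr: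
  fixes x p :: real
  assumes "0 < x" "p \<noteq> 0"
  shows "x * (x powr (1 / p)) powr (1 - p) = x powr (1 / p)"
    and "x * (x powr (1 / p)) powr (2 - p) = (x powr (1 / p))\<^sup>2"
proof -
  have "x * (x powr (1 / p)) powr (a - p) = x powr (a / p)" for a
  proof -
    have "x * (x powr (1 / p)) powr (a - p) = x powr (1 + (a - p) / p)"
      using assms(1) by (simp add: powr_powr powr_add)
    also have "1 + (a - p) / p = a / p" using assms(2) by (simp add: field_simps)
    finally show ?thesis .
  qed
  from this[of 1] this[of 2] show "x * (x powr (1 / p)) powr (1 - p) = x powr (1 / p)"
    and "x * (x powr (1 / p)) powr (2 - p) = (x powr (1 / p))\<^sup>2"
    using assms(1) powr_powr[of x "1 / p" 2] by (simp_all add: powr_numeral)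
qed

lemma powr_le_one_plus_powr:
  fixes y a b :: real
  assumes "0 \<le> a" "a \<le> b" "0 \<le> y"
  shows "y powr a \<le> 1 + y powr b"
proof (cases "y \<le> 1")
  case True
  then have "y powr a \<le> 1" using assms powr_mono2[of a y 1] by (cases "y = 0") auto
  then show ?thesis by (simp add: add_increasing2)
next
  case False
  then have "y powr a \<le> y powr b" using assms by (intro powr_mono) auto
  then show ?thesis by simp
qed

lemma abs_diff_powr_le:
  fixes a c p :: real
  assumes "0 \<le> p"
  shows "\<bar>a - c\<bar> powr p \<le> 2 powr p * (\<bar>a\<bar> powr p + \<bar>c\<bar> powr p)"
proof -
  define m where "m = max \<bar>a\<bar> \<bar>c\<bar>"
  have "\<bar>a - c\<bar> powr p \<le> (2 * m) powr p"
    unfolding m_def using assms by (intro powr_mono2) auto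
  also have "\<dots> = 2 powr p * m powr p" unfolding m_def by (simp add: powr_mult)
  also have "m powr p \<le> \<bar>a\<bar> powr p + \<bar>c\<bar> powr p" unfolding m_def by (auto simp: max_def)
  finally show ?thesis by (simp add: mult_left_mono)
qed

lemma tendsto_real_powr_neg: "s < 0 \<Longrightarrow> (\<lambda>n::nat. real n powr s) \<longlonglongrightarrow> 0"
  by (intro tendsto_neg_powr filterlim_real_sequentially)

lemma summable_poly_times_exp2_neg:
  assumes "0 < c"
  shows "summable (\<lambda>L::nat. (real L + 1) ^ 3 * 2 powr (- c * real L))"
proof (rule summable_comparison_test_ev)
  show "summable (\<lambda>L::nat. inverse (real L ^ 2))" by (rule inverse_power_summable) simp
  have "eventually (\<lambda>L::nat. (real L + 1) ^ 3 * 2 powr (- c * real L) \<le> inverse (real L ^ 2))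
      sequentially"
    using assms by real_asymp
  then show "eventually (\<lambda>L. norm ((real L + 1) ^ 3 * 2 powr (- c * real L)) \<le> inverse (real L ^ 2))
      sequentially"
    by (rule eventually_mono) simp
qed

lemma sqrt_sum_squares_le_sum_abs:
  fixes f :: "'i::finite \<Rightarrow> 'j::finite \<Rightarrow> real"
  shows "sqrt (\<Sum>i\<in>UNIV. \<Sum>j\<in>UNIV. (f i j)\<^sup>2) \<le> (\<Sum>(i, j)\<in>UNIV. \<bar>f i j\<bar>)"
proof -
  have "(\<Sum>i\<in>UNIV. \<Sum>j\<in>UNIV. (f i j)\<^sup>2) = (\<Sum>(i, j)\<in>UNIV. (f i j)\<^sup>2)"
    by (simp add: sum.cartesian_product UNIV_Times_UNIV[symmetric] del: UNIV_Times_UNIV)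
  then have "sqrt (\<Sum>i\<in>UNIV. \<Sum>j\<in>UNIV. (f i j)\<^sup>2) = L2_set (\<lambda>(i, j). f i j) UNIV"
    by (simp add: L2_set_def case_prod_beta)
  also have "\<dots> \<le> (\<Sum>(i, j)\<in>UNIV. \<bar>f i j\<bar>)"
    using L2_set_le_sum_abs[of "\<lambda>(i, j). f i j" UNIV] by (simp add: case_prod_beta)
  finally show ?thesis .
qed

lemma AE_and_nn_integral_null_comparison:
  fixes D B :: "nat \<Rightarrow> 'a \<Rightarrow> real"
  assumes "\<And>n \<omega>. 0 \<le> D n \<omega>" "\<And>n \<omega>. D n \<omega> \<le> B n \<omega>"
    and "AE \<omega> in M. (\<lambda>n. B n \<omega>) \<longlonglongrightarrow> 0"
    and "(\<lambda>n. \<integral>\<^sup>+\<omega>. ennreal (B n \<omega>) \<partial>M) \<longlonglongrightarrow> 0"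
  shows "AE \<omega> in M. (\<lambda>n. D n \<omega>) \<longlonglongrightarrow> 0"
    and "(\<lambda>n. \<integral>\<^sup>+\<omega>. ennreal (D n \<omega>) \<partial>M) \<longlonglongrightarrow> 0"
proof -
  show "AE \<omega> in M. (\<lambda>n. D n \<omega>) \<longlonglongrightarrow> 0"
    using assms(3)
    by eventually_elim (rule Lim_null_comparison[OF always_eventually], use assms(1,2) in auto)
  show "(\<lambda>n. \<integral>\<^sup>+\<omega>. ennreal (D n \<omega>) \<partial>M) \<longlonglongrightarrow> 0"
    using assms(2) by (intro tendsto_sandwich[OF _ _ tendsto_const assms(4)])
      (auto intro!: always_eventually nn_integral_mono ennreal_leI)
qed

context prob_space
begin

lemma integral_abs_le_sqrt_integral_square:
  fixes g :: "'a \<Rightarrow> real"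
  assumes "integrable M g" "integrable M (\<lambda>\<omega>. (g \<omega>)\<^sup>2)"
  shows "(\<integral>\<omega>. \<bar>g \<omega>\<bar> \<partial>M) \<le> sqrt (\<integral>\<omega>. (g \<omega>)\<^sup>2 \<partial>M)"
proof (rule real_le_rsqrt)
  have "0 \<le> variance (\<lambda>\<omega>. \<bar>g \<omega>\<bar>)" by (rule variance_positive)
  then show "(\<integral>\<omega>. \<bar>g \<omega>\<bar> \<partial>M)\<^sup>2 \<le> (\<integral>\<omega>. (g \<omega>)\<^sup>2 \<partial>M)"
    using assms by (subst (asm) variance_eq) auto
qed

lemma integral_prod_indep_sets:
  fixes W :: "'k \<Rightarrow> 'a \<Rightarrow> real"
  assumes "indep_sets F K" "finite K"
    and "\<And>k. k \<in> K \<Longrightarrow> W k \<in> borel_measurable M" "\<And>k. k \<in> K \<Longrightarrow> integrable M (W k)"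
    and "\<And>k B. k \<in> K \<Longrightarrow> B \<in> sets borel \<Longrightarrow> W k -` B \<inter> space M \<in> F k"
  shows "(\<integral>\<omega>. (\<Prod>k\<in>K. W k \<omega>) \<partial>M) = (\<Prod>k\<in>K. \<integral>\<omega>. W k \<omega> \<partial>M)"
proof (rule indep_vars_lebesgue_integral)
  show "indep_vars (\<lambda>_. borel) W K"
    unfolding indep_vars_def2
    using assms(3) by (auto intro!: indep_sets_mono_sets[OF assms(1)] assms(5))
qed (use assms in auto)

end

lemma Int_stable_vimage: "Int_stable {f -` A \<inter> S | A. A \<in> sets N}"
proof (unfold Int_stable_def, safe)
  fix A B assume "A \<in> sets N" "B \<in> sets N"
  then show "\<exists>C. (f -` A \<inter> S) \<inter> (f -` B \<inter> S) = f -` C \<inter> S \<and> C \<in> sets N"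
    by (intro exI[of _ "A \<inter> B"]) auto
qed

section \<open>Genealogy of the reinforced steps\<close>

text \<open>The index of the fresh sample that step \<open>i\<close> repeats. A pointer outside \<open>{1..n}\<close>, a null
  event, counts as a fresh sample, so that the recursion terminates.\<close>

function ancestor :: "(nat \<Rightarrow> 'a \<Rightarrow> bool) \<Rightarrow> (nat \<Rightarrow> 'a \<Rightarrow> nat) \<Rightarrow> nat \<Rightarrow> 'a \<Rightarrow> nat" where
  "ancestor \<xi> U 0 \<omega> = 0"
| "ancestor \<xi> U (Suc n) \<omega> =
     (if \<xi> (Suc n) \<omega> \<and> U n \<omega> \<in> {1..n} then ancestor \<xi> U (U n \<omega>) \<omega> else Suc n)"
  by pat_completeness auto
termination by (relation "Wellfounded.measure (\<lambda>(_, _, n, _). n)") auto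

declare ancestor.simps(2)[simp del]

lemma ancestor_le: "ancestor \<xi> U i \<omega> \<le> i"
proof (induction i rule: less_induct)
  case (less i)
  show ?case
  proof (cases i)
    case (Suc n)
    then show ?thesis using less[of "U n \<omega>"] by (auto simp: ancestor.simps(2))
  qed simp
qed

lemma ancestor_ge_1: "1 \<le> i \<Longrightarrow> 1 \<le> ancestor \<xi> U i \<omega>"
proof (induction i rule: less_induct)
  case (less i)
  then show ?case by (cases i) (auto simp: ancestor.simps(2))
qed

lemma ancestor_in_range: "1 \<le> i \<Longrightarrow> ancestor \<xi> U i \<omega> \<in> {1..i}"
  using ancestor_le ancestor_ge_1 by auto

lemma ancestor_1 [simp]: "ancestor \<xi> U 1 \<omega> = 1"
  using ancestor.simps(2)[of \<xi> U 0 \<omega>] by simp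

locale srrw_process =
  fixes M :: "'a measure" and \<mu> :: "(real ^ 'd) measure" and \<alpha> :: real
    and Y X :: "nat \<Rightarrow> 'a \<Rightarrow> real ^ 'd" and \<xi> :: "nat \<Rightarrow> 'a \<Rightarrow> bool" and U :: "nat \<Rightarrow> 'a \<Rightarrow> nat"
  assumes srrw: "srrw M \<mu> \<alpha> Y \<xi> U X"
begin

sublocale prob_space M
  using srrw by (simp add: srrw_def)

sublocale step: prob_space \<mu>
  using srrw by (simp add: srrw_def)

lemma sets_step: "sets \<mu> = sets borel"
  and alpha_nonneg: "0 \<le> \<alpha>" and alpha_le_1: "\<alpha> \<le> 1"
  and measurable_Y [measurable]: "1 \<le> n \<Longrightarrow> Y n \<in> borel_measurable M"
  and distr_Y: "1 \<le> n \<Longrightarrow> distr M borel (Y n) = \<mu>"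
  and measurable_coin: "2 \<le> n \<Longrightarrow> \<xi> n \<in> measurable M (count_space UNIV)"
  and distr_coin: "2 \<le> n \<Longrightarrow> distr M (count_space UNIV) (\<xi> n) = measure_pmf (bernoulli_pmf \<alpha>)"
  and measurable_pointer: "1 \<le> n \<Longrightarrow> U n \<in> measurable M (count_space UNIV)"
  and distr_pointer: "1 \<le> n \<Longrightarrow> distr M (count_space UNIV) (U n) = measure_pmf (pmf_of_set {1..n})"
  and indep_driving: "indep_sets (srrw_gen M Y \<xi> U) srrw_index"
  and X_1: "\<omega> \<in> space M \<Longrightarrow> X 1 \<omega> = Y 1 \<omega>"
  and X_Suc: "1 \<le> n \<Longrightarrow> \<omega> \<in> space M \<Longrightarrow>
     X (Suc n) \<omega> = (if \<xi> (Suc n) \<omega> then X (U n \<omega>) \<omega> else Y (Suc n) \<omega>)"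
  using srrw by (auto simp: srrw_def)

lemma measurable_step_eq_borel: "measurable \<mu> = measurable borel"
  by (intro ext measurable_cong_sets) (simp_all add: sets_step)

lemma integral_Y: "1 \<le> j \<Longrightarrow> \<phi> \<in> borel_measurable borel \<Longrightarrow> (\<integral>\<omega>. \<phi> (Y j \<omega>) \<partial>M) = (\<integral>x. \<phi> x \<partial>\<mu>)"
  for \<phi> :: "real ^ 'd \<Rightarrow> real"
  using integral_distr[OF measurable_Y, of j \<phi>] distr_Y[of j] by simp

definition driving_sigma :: "(nat + nat + nat) set \<Rightarrow> 'a set set" where
  "driving_sigma I = sigma_sets (space M) (\<Union>i\<in>I. srrw_gen M Y \<xi> U i)"

text \<open>The driving variables that determine the ancestors of the first \<open>n\<close> steps.\<close>

definition genealogy_index_upto :: "nat \<Rightarrow> (nat + nat + nat) set" where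
  "genealogy_index_upto n = Inr ` Inl ` {2..n} \<union> Inr ` Inr ` {1..<n}"

definition genealogy_index :: "(nat + nat + nat) set" where
  "genealogy_index = Inr ` Inl ` {2..} \<union> Inr ` Inr ` {1..}"

lemma in_srrw_index [simp]:
  "Inl j \<in> srrw_index \<longleftrightarrow> 1 \<le> j"
  "Inr (Inl j) \<in> srrw_index \<longleftrightarrow> 2 \<le> j"
  "Inr (Inr j) \<in> srrw_index \<longleftrightarrow> 1 \<le> j"
  by (auto simp: srrw_index_def)

lemma genealogy_index_upto_subset: "genealogy_index_upto n \<subseteq> genealogy_index"
  and genealogy_index_subset: "genealogy_index \<subseteq> srrw_index"
  by (auto simp: genealogy_index_upto_def genealogy_index_def srrw_index_def)

lemma srrw_gen_subset_Pow: "srrw_gen M Y \<xi> U i \<subseteq> Pow (space M)"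
  by (auto simp: srrw_gen_def split: sum.splits)

lemma sigma_algebra_driving_sigma: "sigma_algebra (space M) (driving_sigma I)"
  unfolding driving_sigma_def using srrw_gen_subset_Pow by (intro sigma_algebra_sigma_sets) blast

lemma driving_sigma_mono: "I \<subseteq> J \<Longrightarrow> driving_sigma I \<subseteq> driving_sigma J"
  unfolding driving_sigma_def by (intro sigma_sets_mono') auto

lemma driving_sigma_subset_events: "I \<subseteq> srrw_index \<Longrightarrow> driving_sigma I \<subseteq> events"
  unfolding driving_sigma_def using indep_driving
  by (intro sets.sigma_sets_subset) (auto simp: indep_sets_def)

lemma genealogy_sigma_subset_events: "driving_sigma genealogy_index \<subseteq> events"
  using driving_sigma_subset_events[OF genealogy_index_subset] .

lemma indep_driving_sigma:
  fixes I :: "'k \<Rightarrow> (nat + nat + nat) set"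
  assumes "\<And>k. k \<in> K \<Longrightarrow> I k \<subseteq> srrw_index" "disjoint_family_on I K"
  shows "indep_sets (\<lambda>k. driving_sigma (I k)) K"
  unfolding driving_sigma_def
proof (rule indep_sets_collect_sigma)
  show "indep_sets (srrw_gen M Y \<xi> U) (\<Union>k\<in>K. I k)"
    by (rule indep_sets_mono_index[OF _ indep_driving]) (use assms(1) in auto)
  show "Int_stable (srrw_gen M Y \<xi> U i)" for i
    unfolding srrw_gen_def by (simp only: split: sum.split) (blast intro: Int_stable_vimage)
qed (use assms in auto)

lemma coin_event: "Inr (Inl n) \<in> I \<Longrightarrow> {\<omega>\<in>space M. \<xi> n \<omega>} \<in> driving_sigma I"
  unfolding driving_sigma_def
  by (rule sigma_sets.Basic) (auto simp: srrw_gen_def intro!: bexI[of _ "Inr (Inl n)"] exI[of _ "{True}"])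

lemma pointer_event: "Inr (Inr n) \<in> I \<Longrightarrow> {\<omega>\<in>space M. U n \<omega> = u} \<in> driving_sigma I"
  unfolding driving_sigma_def
  by (rule sigma_sets.Basic) (auto simp: srrw_gen_def intro!: bexI[of _ "Inr (Inr n)"] exI[of _ "{u}"])

lemma innovation_event:
  assumes "Inl j \<in> I" "f \<in> borel_measurable borel" "B \<in> sets borel"
  shows "(\<lambda>\<omega>. f (Y j \<omega>)) -` B \<inter> space M \<in> driving_sigma I"
proof -
  have "f -` B \<in> sets borel" using measurable_sets[OF assms(2,3)] by simp
  then show ?thesis
    unfolding driving_sigma_def using assms(1)
    by (intro sigma_sets.Basic) (auto simp: srrw_gen_def intro!: bexI[of _ "Inl j"] exI[of _ "f -` B"])
qed

lemma indicator_vimage_driving_sigma: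
  assumes "A \<in> driving_sigma I"
  shows "(indicator A :: 'a \<Rightarrow> real) -` B \<inter> space M \<in> driving_sigma I"
proof -
  interpret sigma_algebra "space M" "driving_sigma I" by (rule sigma_algebra_driving_sigma)
  have "A \<subseteq> space M" using assms sets_into_space by blast
  then have "(indicator A :: 'a \<Rightarrow> real) -` B \<inter> space M =
      (if 1 \<in> B then A else {}) \<union> (if 0 \<in> B then space M - A else {})"
    by (auto simp: indicator_def of_bool_def split: if_splits)
  then show ?thesis using assms by auto
qed

lemma ancestor_event:
  assumes "i \<le> n"
  shows "{\<omega>\<in>space M. ancestor \<xi> U i \<omega> = j} \<in> driving_sigma (genealogy_index_upto n)"
  using assms
proof (induction n arbitrary: i j)
  case 0
  interpret sigma_algebra "space M" "driving_sigma (genealogy_index_upto 0)"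
    by (rule sigma_algebra_driving_sigma)
  show ?case using 0 by (cases "j = 0") auto
next
  case (Suc n)
  let ?G = "driving_sigma (genealogy_index_upto (Suc n))"
  interpret sigma_algebra "space M" ?G by (rule sigma_algebra_driving_sigma)
  have "driving_sigma (genealogy_index_upto n) \<subseteq> ?G"
    by (rule driving_sigma_mono) (auto simp: genealogy_index_upto_def)
  then have IH: "{\<omega>\<in>space M. ancestor \<xi> U v \<omega> = j} \<in> ?G" if "v \<le> n" for v
    using Suc.IH[OF that] by blast
  show ?case
  proof (cases "i \<le> n")
    case False
    then have i: "i = Suc n" using Suc.prems by simp
    define jump where "jump v = {\<omega>\<in>space M. \<xi> (Suc n) \<omega>} \<inter> {\<omega>\<in>space M. U n \<omega> = v}" for v
    have jump: "jump v \<in> ?G" if "v \<in> {1..n}" for v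
      unfolding jump_def using that
      by (intro Int coin_event pointer_event) (auto simp: genealogy_index_upto_def)
    have "{\<omega>\<in>space M. ancestor \<xi> U i \<omega> = j} =
        (\<Union>v\<in>{1..n}. jump v \<inter> {\<omega>\<in>space M. ancestor \<xi> U v \<omega> = j}) \<union>
        ((space M - (\<Union>v\<in>{1..n}. jump v)) \<inter> (if j = Suc n then space M else {}))"
      unfolding i jump_def by (auto simp: ancestor.simps(2))
    also have "\<dots> \<in> ?G"
      using jump IH by (intro Un finite_UN Int Diff) auto
    finally show ?thesis .
  qed (use IH in auto)
qed

lemma same_ancestor_event:
  assumes "i \<le> n" "i' \<le> n"
  shows "{\<omega>\<in>space M. ancestor \<xi> U i \<omega> = ancestor \<xi> U i' \<omega>} \<in> driving_sigma (genealogy_index_upto n)"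
proof -
  interpret sigma_algebra "space M" "driving_sigma (genealogy_index_upto n)"
    by (rule sigma_algebra_driving_sigma)
  have "{\<omega>\<in>space M. ancestor \<xi> U i \<omega> = ancestor \<xi> U i' \<omega>} =
      (\<Union>j\<in>{..n}. {\<omega>\<in>space M. ancestor \<xi> U i \<omega> = j} \<inter> {\<omega>\<in>space M. ancestor \<xi> U i' \<omega> = j})"
    using assms ancestor_le[of \<xi> U i] ancestor_le[of \<xi> U i'] by (auto intro: order_trans)
  also have "\<dots> \<in> driving_sigma (genealogy_index_upto n)"
    using assms by (intro finite_UN Int ancestor_event) auto
  finally show ?thesis .
qed

lemma ancestor_event_genealogy: "{\<omega>\<in>space M. ancestor \<xi> U i \<omega> = j} \<in> driving_sigma genealogy_index"
  using ancestor_event[of i i j] driving_sigma_mono[OF genealogy_index_upto_subset] by blast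

lemma ancestor_event_sets [measurable]: "{\<omega>\<in>space M. ancestor \<xi> U i \<omega> = j} \<in> sets M"
  using ancestor_event_genealogy genealogy_sigma_subset_events by blast

lemma measurable_ancestor: "ancestor \<xi> U i \<in> measurable M (count_space UNIV)"
  using ancestor_event_sets
  by (subst measurable_count_space_eq2_countable) (auto simp: vimage_def Int_def conj_commute)

text \<open>Unlike \<open>X\<close>, which is only given recursively, \<open>Xanc\<close> is an explicit function of the driving
  variables; the two agree almost surely.\<close>

definition Xanc :: "nat \<Rightarrow> 'a \<Rightarrow> real ^ 'd" where
  "Xanc i \<omega> = Y (ancestor \<xi> U i \<omega>) \<omega>"

lemma measurable_Xanc [measurable]: "1 \<le> i \<Longrightarrow> Xanc i \<in> borel_measurable M"
proof -
  assume i: "1 \<le> i"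
  have "(\<lambda>\<omega>. (\<lambda>j. if 1 \<le> j then Y j \<omega> else 0) (ancestor \<xi> U i \<omega>)) \<in> borel_measurable M"
  proof (rule measurable_compose_countable'[OF _ measurable_ancestor])
    show "(\<lambda>\<omega>. if 1 \<le> j then Y j \<omega> else 0) \<in> borel_measurable M" for j by (cases "1 \<le> j") auto
  qed auto
  also have "(\<lambda>\<omega>. (\<lambda>j. if 1 \<le> j then Y j \<omega> else 0) (ancestor \<xi> U i \<omega>)) = Xanc i"
    using ancestor_ge_1[OF i, of \<xi> U] by (simp add: Xanc_def fun_eq_iff)
  finally show ?thesis .
qed

lemma AE_pointers_in_range: "AE \<omega> in M. \<forall>n\<ge>1. U n \<omega> \<in> {1..n}"
proof -
  have "AE \<omega> in M. U n \<omega> \<in> {1..n}" if n: "1 \<le> n" for n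
  proof -
    have "prob {\<omega>\<in>space M. U n \<omega> \<in> {1..n}} = measure (distr M (count_space UNIV) (U n)) {1..n}"
      using n by (subst measure_distr[OF measurable_pointer]) (auto simp: vimage_def Int_def conj_commute)
    also have "\<dots> = 1" using n by (simp add: distr_pointer measure_pmf_of_set)
    finally show ?thesis by (rule AE_mp[OF AE_prob_1]) auto
  qed
  then show ?thesis by (subst AE_all_countable) auto
qed

lemma X_eq_Xanc: "AE \<omega> in M. \<forall>i\<ge>1. X i \<omega> = Xanc i \<omega>"
  using AE_pointers_in_range AE_space
proof eventually_elim
  case (elim \<omega>)
  show ?case
  proof (intro allI impI)
    fix i :: nat assume "1 \<le> i"
    then show "X i \<omega> = Xanc i \<omega>"
    proof (induction i rule: less_induct)
      case (less i)
      show ?case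
      proof (cases "i = 1")
        case True then show ?thesis using elim X_1[of \<omega>] ancestor_1[of \<xi> U \<omega>] by (simp add: Xanc_def)
      next
        case False
        then obtain n where n: "i = Suc n" "1 \<le> n" using less.prems by (cases i) auto
        then have "U n \<omega> \<in> {1..n}" using elim by auto
        then show ?thesis
          using n elim less.IH[of "U n \<omega>"] by (auto simp: X_Suc Xanc_def ancestor.simps(2))
      qed
    qed
  qed
qed

end

section \<open>Second moments through common ancestors\<close>

context srrw_process
begin

lemma integral_genealogy_innovations:
  fixes \<phi> :: "nat \<Rightarrow> real ^ 'd \<Rightarrow> real"
  assumes A: "A \<in> driving_sigma genealogy_index"
    and J: "finite J" "\<And>j. j \<in> J \<Longrightarrow> 1 \<le> j"
    and \<phi>: "\<And>j. j \<in> J \<Longrightarrow> \<phi> j \<in> borel_measurable borel" "\<And>j x. j \<in> J \<Longrightarrow> \<bar>\<phi> j x\<bar> \<le> B"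
  shows "(\<integral>\<omega>. indicator A \<omega> * (\<Prod>j\<in>J. \<phi> j (Y j \<omega>)) \<partial>M) = prob A * (\<Prod>j\<in>J. \<integral>x. \<phi> j x \<partial>\<mu>)"
proof -
  define I where "I k = (case k of None \<Rightarrow> genealogy_index | Some j \<Rightarrow> {Inl j})" for k
  define W where "W k = (case k of None \<Rightarrow> indicator A | Some j \<Rightarrow> (\<lambda>\<omega>. \<phi> j (Y j \<omega>)))" for k
  let ?K = "insert None (Some ` J)"
  have A_sets: "A \<in> events" using A genealogy_sigma_subset_events by blast
  have indep: "indep_sets (\<lambda>k. driving_sigma (I k)) ?K"
    using genealogy_index_subset J(2)
    by (intro indep_driving_sigma) (auto simp: I_def disjoint_family_on_def genealogy_index_def)
  have "(\<integral>\<omega>. (\<Prod>k\<in>?K. W k \<omega>) \<partial>M) = (\<Prod>k\<in>?K. \<integral>\<omega>. W k \<omega> \<partial>M)"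
  proof (rule integral_prod_indep_sets[OF indep])
    fix k assume k: "k \<in> ?K"
    show "W k \<in> borel_measurable M" using k A_sets J(2) \<phi>(1) by (auto simp: W_def)
    show "integrable M (W k)"
    proof (cases k)
      case None
      then show ?thesis using A_sets by (simp add: W_def emeasure_eq_measure)
    next
      case (Some j)
      then show ?thesis
        using k J(2) \<phi> by (auto simp: W_def intro!: integrable_const_bound[where B=B])
    qed
    show "W k -` C \<inter> space M \<in> driving_sigma (I k)" if "C \<in> sets borel" for C
    proof (cases k)
      case None
      then show ?thesis using A by (simp add: W_def I_def indicator_vimage_driving_sigma)
    next
      case (Some j)
      then show ?thesis using k that \<phi>(1) by (auto simp: W_def I_def intro: innovation_event)
    qed
  qed (use J in simp)
  then show ?thesis
    using J A_sets by (simp add: W_def prod.reindex integral_Y \<phi>(1))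
qed

lemma prob_coin: "1 \<le> n \<Longrightarrow> prob {\<omega>\<in>space M. \<xi> (Suc n) \<omega>} = \<alpha>"
  using measure_distr[OF measurable_coin, of "Suc n" "{True}"] distr_coin[of "Suc n"]
    alpha_nonneg alpha_le_1
  by (simp add: vimage_def Int_def conj_commute measure_pmf_single)

lemma prob_pointer:
  assumes "1 \<le> n"
  shows "prob {\<omega>\<in>space M. U n \<omega> = u} = (if u \<in> {1..n} then 1 / real n else 0)"
proof -
  have "prob {\<omega>\<in>space M. U n \<omega> = u} = measure (distr M (count_space UNIV) (U n)) {u}"
    using assms by (subst measure_distr[OF measurable_pointer]) (auto simp: vimage_def Int_def conj_commute)
  then show ?thesis
    using assms by (simp add: distr_pointer measure_pmf_single pmf_of_set indicator_def)
qed

text \<open>The coin \<open>\<xi>\<^bsub>n+1\<^esub>\<close> and the pointer \<open>U\<^sub>n\<close> are independent of the genealogy of the first \<open>n\<close>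
  steps.\<close>

lemma prob_jump_genealogy:
  assumes n: "1 \<le> n" and A: "A \<in> driving_sigma (genealogy_index_upto n)"
  shows "prob ({\<omega>\<in>space M. \<xi> (Suc n) \<omega>} \<inter> {\<omega>\<in>space M. U n \<omega> = u} \<inter> A)
     = \<alpha> * (if u \<in> {1..n} then 1 / real n else 0) * prob A"
proof -
  define I where "I m = (if m = 0 then genealogy_index_upto n
    else if m = 1 then {Inr (Inl (Suc n))} else {Inr (Inr n)})" for m :: nat
  define E where "E m = (if m = 0 then A
    else if m = 1 then {\<omega>\<in>space M. \<xi> (Suc n) \<omega>} else {\<omega>\<in>space M. U n \<omega> = u})" for m :: nat
  have "indep_sets (\<lambda>m. driving_sigma (I m)) {0, 1, 2}"
    using genealogy_index_upto_subset genealogy_index_subset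
    using n by (intro indep_driving_sigma) (auto simp: I_def disjoint_family_on_def genealogy_index_upto_def)
  then have "prob (\<Inter>m\<in>{0, 1, 2}. E m) = (\<Prod>m\<in>{0, 1, 2}. prob (E m))"
    by (rule indep_setsD) (use A in \<open>auto simp: E_def I_def intro: coin_event pointer_event\<close>)
  moreover have "(\<Inter>m\<in>{0, 1, 2}. E m) = {\<omega>\<in>space M. \<xi> (Suc n) \<omega>} \<inter> {\<omega>\<in>space M. U n \<omega> = u} \<inter> A"
    by (auto simp: E_def)
  ultimately show ?thesis using n by (simp add: E_def prob_coin prob_pointer)
qed

lemma distr_Xanc:
  assumes i: "1 \<le> i"
  shows "distr M borel (Xanc i) = \<mu>"
proof (rule measure_eqI)
  show "sets (distr M borel (Xanc i)) = sets \<mu>" using sets_step by simp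
  fix B assume "B \<in> sets (distr M borel (Xanc i))"
  then have B: "B \<in> sets borel" by simp
  let ?E = "\<lambda>j. {\<omega>\<in>space M. ancestor \<xi> U i \<omega> = j}"
  have "prob (Xanc i -` B \<inter> space M) = (\<integral>\<omega>. indicator (Xanc i -` B \<inter> space M) \<omega> \<partial>M)"
    using i B by (simp add: measurable_sets)
  also have "\<dots> = (\<integral>\<omega>. (\<Sum>j\<in>{1..i}. indicator (?E j) \<omega> * indicator B (Y j \<omega>)) \<partial>M)"
  proof (rule Bochner_Integration.integral_cong[OF refl])
    fix \<omega> assume \<omega>: "\<omega> \<in> space M"
    then have "indicator (?E j) \<omega> * x = (if j = ancestor \<xi> U i \<omega> then x else 0)" for j and x :: real
      by (auto simp: indicator_def)
    then show "indicator (Xanc i -` B \<inter> space M) \<omega> =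
        (\<Sum>j\<in>{1..i}. indicator (?E j) \<omega> * indicator B (Y j \<omega>) :: real)"
      using \<omega> ancestor_in_range[OF i, of \<xi> U \<omega>]
      by (simp only: sum.delta) (simp add: Xanc_def indicator_def)
  qed
  also have "\<dots> = (\<Sum>j\<in>{1..i}. \<integral>\<omega>. indicator (?E j) \<omega> * indicator B (Y j \<omega>) \<partial>M)"
    using B by (intro Bochner_Integration.integral_sum integrable_const_bound[where B=1] AE_I2)
      (auto simp: indicator_def)
  also have "\<dots> = (\<Sum>j\<in>{1..i}. prob (?E j) * measure \<mu> B)"
  proof (rule sum.cong[OF refl])
    fix j assume j: "j \<in> {1..i}"
    have "(\<integral>\<omega>. indicator (?E j) \<omega> * (\<Prod>j'\<in>{j}. indicator B (Y j' \<omega>)) \<partial>M) =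
        prob (?E j) * (\<Prod>j'\<in>{j}. \<integral>x. indicator B x \<partial>\<mu>)"
      by (rule integral_genealogy_innovations[OF ancestor_event_genealogy, where B=1])
        (use j B in \<open>auto simp: indicator_def\<close>)
    then show "(\<integral>\<omega>. indicator (?E j) \<omega> * indicator B (Y j \<omega>) \<partial>M) = prob (?E j) * measure \<mu> B"
      using B sets_step by (simp add: step.emeasure_eq_measure)
  qed
  also have "\<dots> = prob (\<Union>j\<in>{1..i}. ?E j) * measure \<mu> B"
    by (subst measure_finite_Union) (auto simp: disjoint_family_on_def sum_distrib_right)
  also have "(\<Union>j\<in>{1..i}. ?E j) = space M"
    using ancestor_in_range[OF i, of \<xi> U] by auto
  finally have "prob (Xanc i -` B \<inter> space M) = measure \<mu> B" by (simp add: prob_space)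
  then show "emeasure (distr M borel (Xanc i)) B = emeasure \<mu> B"
    using B i by (simp add: emeasure_distr emeasure_eq_measure step.emeasure_eq_measure)
qed

lemma integral_Xanc: "1 \<le> i \<Longrightarrow> g \<in> borel_measurable borel \<Longrightarrow> (\<integral>\<omega>. g (Xanc i \<omega>) \<partial>M) = (\<integral>x. g x \<partial>\<mu>)"
  for g :: "real ^ 'd \<Rightarrow> real"
  using integral_distr[OF measurable_Xanc, of i g] distr_Xanc[of i] by simp

lemma integrable_Xanc:
  "1 \<le> i \<Longrightarrow> g \<in> borel_measurable borel \<Longrightarrow> integrable \<mu> g \<Longrightarrow> integrable M (\<lambda>\<omega>. g (Xanc i \<omega>))"
  for g :: "real ^ 'd \<Rightarrow> real"
  using integrable_distr_eq[OF measurable_Xanc, of i g] distr_Xanc[of i] by simp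

lemma prob_Xanc: "1 \<le> i \<Longrightarrow> B \<in> sets borel \<Longrightarrow> prob {\<omega>\<in>space M. Xanc i \<omega> \<in> B} = measure \<mu> B"
  using measure_distr[OF measurable_Xanc, of i B] distr_Xanc[of i]
  by (simp add: vimage_def Int_def conj_commute)

lemma integral_genealogy_innovation_pair:
  fixes f :: "real ^ 'd \<Rightarrow> real"
  assumes A: "A \<in> driving_sigma genealogy_index" and jk: "1 \<le> j" "1 \<le> k"
    and f: "f \<in> borel_measurable borel" "\<And>x. \<bar>f x\<bar> \<le> B" and f0: "(\<integral>x. f x \<partial>\<mu>) = 0"
  shows "(\<integral>\<omega>. indicator A \<omega> * (f (Y j \<omega>) * f (Y k \<omega>)) \<partial>M) =
    (if j = k then prob A * (\<integral>x. (f x)\<^sup>2 \<partial>\<mu>) else 0)"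
proof (cases "j = k")
  case True
  have "\<bar>(f x)\<^sup>2\<bar> \<le> B\<^sup>2" for x
    using power_mono[OF f(2)[of x] abs_ge_zero, of 2] by simp
  then have "(\<integral>\<omega>. indicator A \<omega> * (\<Prod>j'\<in>{j}. (f (Y j' \<omega>))\<^sup>2) \<partial>M) =
      prob A * (\<Prod>j'\<in>{j}. \<integral>x. (f x)\<^sup>2 \<partial>\<mu>)"
    using jk f by (intro integral_genealogy_innovations[OF A, where B="B\<^sup>2"]) auto
  then show ?thesis using True by (simp add: power2_eq_square)
next
  case False
  have "(\<integral>\<omega>. indicator A \<omega> * (\<Prod>j'\<in>{j, k}. f (Y j' \<omega>)) \<partial>M) =
      prob A * (\<Prod>j'\<in>{j, k}. \<integral>x. f x \<partial>\<mu>)"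
    using jk f by (intro integral_genealogy_innovations[OF A, where B=B]) auto
  then show ?thesis using False f0 by simp
qed

definition same_ancestor_prob :: "nat \<Rightarrow> nat \<Rightarrow> real" where
  "same_ancestor_prob i i' = prob {\<omega>\<in>space M. ancestor \<xi> U i \<omega> = ancestor \<xi> U i' \<omega>}"

definition ancestor_pairs :: "nat \<Rightarrow> nat \<Rightarrow> real" where
  "ancestor_pairs lo hi = (\<Sum>i\<in>{lo<..hi}. \<Sum>i'\<in>{lo<..hi}. same_ancestor_prob i i')"

lemma integral_mult_Xanc:
  fixes f :: "real ^ 'd \<Rightarrow> real"
  assumes i: "1 \<le> i" "1 \<le> i'"
    and f: "f \<in> borel_measurable borel" "\<And>x. \<bar>f x\<bar> \<le> B" and f0: "(\<integral>x. f x \<partial>\<mu>) = 0"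
  shows "(\<integral>\<omega>. f (Xanc i \<omega>) * f (Xanc i' \<omega>) \<partial>M) = (\<integral>x. (f x)\<^sup>2 \<partial>\<mu>) * same_ancestor_prob i i'"
proof -
  define m where "m = max i i'"
  define E where "E j k = {\<omega>\<in>space M. ancestor \<xi> U i \<omega> = j} \<inter> {\<omega>\<in>space M. ancestor \<xi> U i' \<omega> = k}"
    for j k
  have E: "E j k \<in> driving_sigma genealogy_index" for j k
  proof -
    interpret sigma_algebra "space M" "driving_sigma genealogy_index"
      by (rule sigma_algebra_driving_sigma)
    show ?thesis unfolding E_def by (intro Int ancestor_event_genealogy)
  qed
  have range: "ancestor \<xi> U i \<omega> \<in> {1..m}" "ancestor \<xi> U i' \<omega> \<in> {1..m}" for \<omega>
    using ancestor_in_range[OF i(1), of \<xi> U \<omega>] ancestor_in_range[OF i(2), of \<xi> U \<omega>]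
    by (auto simp: m_def)
  have B: "0 \<le> B" using f(2)[of 0] by simp
  have "(\<integral>\<omega>. f (Xanc i \<omega>) * f (Xanc i' \<omega>) \<partial>M) =
      (\<integral>\<omega>. (\<Sum>j\<in>{1..m}. \<Sum>k\<in>{1..m}. indicator (E j k) \<omega> * (f (Y j \<omega>) * f (Y k \<omega>))) \<partial>M)"
  proof (rule Bochner_Integration.integral_cong[OF refl])
    fix \<omega> assume "\<omega> \<in> space M"
    then have "indicator (E j k) \<omega> * x =
        (if k = ancestor \<xi> U i' \<omega> then if j = ancestor \<xi> U i \<omega> then x else 0 else 0)" for j k and x :: real
      by (auto simp: E_def indicator_def)
    then show "f (Xanc i \<omega>) * f (Xanc i' \<omega>) =
        (\<Sum>j\<in>{1..m}. \<Sum>k\<in>{1..m}. indicator (E j k) \<omega> * (f (Y j \<omega>) * f (Y k \<omega>)))"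
      using range[of \<omega>] by (simp only: sum.delta) (simp add: Xanc_def)
  qed
  also have "\<dots> = (\<Sum>j\<in>{1..m}. \<Sum>k\<in>{1..m}. \<integral>\<omega>. indicator (E j k) \<omega> * (f (Y j \<omega>) * f (Y k \<omega>)) \<partial>M)"
  proof -
    have "integrable M (\<lambda>\<omega>. indicator (E j k) \<omega> * (f (Y j \<omega>) * f (Y k \<omega>)))"
      if "j \<in> {1..m}" "k \<in> {1..m}" for j k
      using that E[of j k] genealogy_sigma_subset_events f B
      by (intro integrable_const_bound[where B="B * B"] AE_I2)
        (auto simp: abs_mult indicator_def intro: mult_mono')
    then show ?thesis
      by (intro Bochner_Integration.integral_sum Bochner_Integration.integrable_sum sum.cong refl
          trans[OF Bochner_Integration.integral_sum])
  qed
  also have "\<dots> = (\<Sum>j\<in>{1..m}. \<Sum>k\<in>{1..m}. if j = k then prob (E j k) * (\<integral>x. (f x)\<^sup>2 \<partial>\<mu>) else 0)"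
    using E f f0 by (intro sum.cong refl integral_genealogy_innovation_pair) auto
  also have "\<dots> = (\<integral>x. (f x)\<^sup>2 \<partial>\<mu>) * prob (\<Union>j\<in>{1..m}. E j j)"
    using E genealogy_sigma_subset_events
    by (subst measure_finite_Union) (auto simp: disjoint_family_on_def E_def sum_distrib_left mult.commute)
  also have "(\<Union>j\<in>{1..m}. E j j) = {\<omega>\<in>space M. ancestor \<xi> U i \<omega> = ancestor \<xi> U i' \<omega>}"
    using range by (auto simp: E_def)
  finally show ?thesis by (simp add: same_ancestor_prob_def)
qed

lemma integral_square_sum_Xanc:
  fixes f :: "real ^ 'd \<Rightarrow> real"
  assumes f: "f \<in> borel_measurable borel" "\<And>x. \<bar>f x\<bar> \<le> B" and f0: "(\<integral>x. f x \<partial>\<mu>) = 0"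
  shows "(\<integral>\<omega>. (\<Sum>i\<in>{lo<..hi}. f (Xanc i \<omega>))\<^sup>2 \<partial>M) = (\<integral>x. (f x)\<^sup>2 \<partial>\<mu>) * ancestor_pairs lo hi"
proof -
  have B: "0 \<le> B" using f(2)[of 0] by simp
  have int: "integrable M (\<lambda>\<omega>. f (Xanc i \<omega>) * f (Xanc i' \<omega>))" if "i \<in> {lo<..hi}" "i' \<in> {lo<..hi}" for i i'
    using that f B
    by (intro integrable_const_bound[where B="B * B"]) (auto simp: abs_mult intro!: AE_I2 mult_mono')
  have "(\<integral>\<omega>. (\<Sum>i\<in>{lo<..hi}. f (Xanc i \<omega>))\<^sup>2 \<partial>M) =
      (\<integral>\<omega>. (\<Sum>i\<in>{lo<..hi}. \<Sum>i'\<in>{lo<..hi}. f (Xanc i \<omega>) * f (Xanc i' \<omega>)) \<partial>M)"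
    by (simp add: power2_eq_square sum_product)
  also have "\<dots> = (\<Sum>i\<in>{lo<..hi}. \<Sum>i'\<in>{lo<..hi}. \<integral>\<omega>. f (Xanc i \<omega>) * f (Xanc i' \<omega>) \<partial>M)"
    using int by (intro Bochner_Integration.integral_sum Bochner_Integration.integrable_sum sum.cong refl
        trans[OF Bochner_Integration.integral_sum])
  also have "\<dots> = (\<Sum>i\<in>{lo<..hi}. \<Sum>i'\<in>{lo<..hi}. (\<integral>x. (f x)\<^sup>2 \<partial>\<mu>) * same_ancestor_prob i i')"
    using f f0 by (intro sum.cong refl integral_mult_Xanc) auto
  finally show ?thesis by (simp add: ancestor_pairs_def sum_distrib_left)
qed

end

section \<open>Counting pairs with a common ancestor\<close>

context srrw_process
begin

lemma same_ancestor_prob_commute: "same_ancestor_prob i i' = same_ancestor_prob i' i"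
  unfolding same_ancestor_prob_def by (simp add: eq_commute)

lemma same_ancestor_prob_self: "same_ancestor_prob i i = 1"
  unfolding same_ancestor_prob_def by (simp add: prob_space)

lemma same_ancestor_prob_nonneg: "0 \<le> same_ancestor_prob i i'"
  unfolding same_ancestor_prob_def by simp

lemma same_ancestor_prob_Suc:
  assumes n: "1 \<le> n" and i: "i \<le> n"
  shows "same_ancestor_prob (Suc n) i = \<alpha> / n * (\<Sum>u\<in>{1..n}. same_ancestor_prob u i)"
proof -
  define F where "F u = {\<omega>\<in>space M. \<xi> (Suc n) \<omega>} \<inter> {\<omega>\<in>space M. U n \<omega> = u} \<inter>
    {\<omega>\<in>space M. ancestor \<xi> U u \<omega> = ancestor \<xi> U i \<omega>}" for u
  have "{\<omega>\<in>space M. ancestor \<xi> U (Suc n) \<omega> = ancestor \<xi> U i \<omega>} = (\<Union>u\<in>{1..n}. F u)"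
  proof (intro set_eqI iffI)
    fix \<omega> assume \<omega>: "\<omega> \<in> {\<omega>\<in>space M. ancestor \<xi> U (Suc n) \<omega> = ancestor \<xi> U i \<omega>}"
    then have eq: "(if \<xi> (Suc n) \<omega> \<and> U n \<omega> \<in> {1..n} then ancestor \<xi> U (U n \<omega>) \<omega> else Suc n) =
        ancestor \<xi> U i \<omega>"
      by (simp only: mem_Collect_eq ancestor.simps(2))
    have "ancestor \<xi> U i \<omega> \<noteq> Suc n" using ancestor_le[of \<xi> U i \<omega>] i by simp
    then have "\<xi> (Suc n) \<omega> \<and> U n \<omega> \<in> {1..n}" using eq by argo
    then show "\<omega> \<in> (\<Union>u\<in>{1..n}. F u)" using \<omega> eq unfolding F_def by auto
  next
    fix \<omega> assume "\<omega> \<in> (\<Union>u\<in>{1..n}. F u)"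
    then show "\<omega> \<in> {\<omega>\<in>space M. ancestor \<xi> U (Suc n) \<omega> = ancestor \<xi> U i \<omega>}"
      unfolding F_def by (auto simp only: ancestor.simps(2)) auto
  qed
  then have "same_ancestor_prob (Suc n) i = prob (\<Union>u\<in>{1..n}. F u)"
    by (simp add: same_ancestor_prob_def)
  also have "\<dots> = (\<Sum>u\<in>{1..n}. prob (F u))"
  proof (rule measure_finite_Union)
    interpret sigma_algebra "space M" "driving_sigma (genealogy_index_upto (Suc n))"
      by (rule sigma_algebra_driving_sigma)
    have "F u \<in> driving_sigma (genealogy_index_upto (Suc n))" if "u \<in> {1..n}" for u
      unfolding F_def using that n i
      by (intro Int coin_event pointer_event same_ancestor_event) (auto simp: genealogy_index_upto_def)
    then show "F ` {1..n} \<subseteq> events"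
      using driving_sigma_subset_events genealogy_index_upto_subset genealogy_index_subset by blast
  qed (auto simp: disjoint_family_on_def F_def)
  also have "\<dots> = (\<Sum>u\<in>{1..n}. \<alpha> * (1 / real n) * same_ancestor_prob u i)"
    unfolding F_def same_ancestor_prob_def using n i
    by (intro sum.cong refl) (simp add: prob_jump_genealogy same_ancestor_event)
  finally show ?thesis by (simp add: sum_distrib_left)
qed

lemma ancestor_pairs_Suc:
  assumes n: "1 \<le> n"
  shows "ancestor_pairs 0 (Suc n) = ancestor_pairs 0 n * (1 + 2 * \<alpha> / n) + 1"
proof -
  let ?c = "ancestor_pairs 0 n"
  have row: "(\<Sum>i\<in>{0<..n}. same_ancestor_prob (Suc n) i) = \<alpha> / n * ?c"
  proof -
    have "{1..n} = {0<..n}" by auto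
    then have "(\<Sum>i\<in>{0<..n}. same_ancestor_prob (Suc n) i) =
        (\<Sum>i\<in>{0<..n}. \<alpha> / n * (\<Sum>u\<in>{0<..n}. same_ancestor_prob u i))"
      using same_ancestor_prob_Suc[OF n] by (intro sum.cong refl) auto
    also have "\<dots> = \<alpha> / n * (\<Sum>i\<in>{0<..n}. \<Sum>u\<in>{0<..n}. same_ancestor_prob u i)"
      by (simp add: sum_distrib_left)
    also have "(\<Sum>i\<in>{0<..n}. \<Sum>u\<in>{0<..n}. same_ancestor_prob u i) = ?c"
      unfolding ancestor_pairs_def by (rule sum.swap)
    finally show ?thesis .
  qed
  have "{0<..Suc n} = insert (Suc n) {0<..n}" by auto
  then have "ancestor_pairs 0 (Suc n) = 1 + (\<Sum>i\<in>{0<..n}. same_ancestor_prob (Suc n) i)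
      + (\<Sum>i\<in>{0<..n}. same_ancestor_prob i (Suc n)) + ?c"
    by (simp add: ancestor_pairs_def sum.distrib same_ancestor_prob_self)
  also have "\<dots> = 1 + 2 * (\<alpha> / n * ?c) + ?c"
    using row by (simp add: same_ancestor_prob_commute[of _ "Suc n"])
  finally show ?thesis by (simp add: algebra_simps)
qed

lemma ancestor_pairs_nonneg: "0 \<le> ancestor_pairs lo hi"
  unfolding ancestor_pairs_def by (intro sum_nonneg same_ancestor_prob_nonneg)

text \<open>This is where \<open>\<alpha> \<le> 1/2\<close> enters: the recursion \<open>c\<^bsub>n+1\<^esub> = (1 + 2\<alpha>/n) c\<^sub>n + 1\<close> grows like
  \<open>n\<^bsup>2\<alpha>\<^esup>\<close> for \<open>\<alpha> > 1/2\<close>, but only like \<open>n log n\<close> for \<open>\<alpha> = 1/2\<close>.\<close>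

lemma ancestor_pairs_le:
  assumes "\<alpha> \<le> 1/2" "1 \<le> n"
  shows "ancestor_pairs 0 n \<le> real n * harm n"
  using assms(2)
proof (induction n rule: nat_induct_at_least)
  case base
  have "{0<..Suc 0} = {1}" by auto
  then show ?case by (simp add: ancestor_pairs_def same_ancestor_prob_self harm_def)
next
  case (Suc n)
  let ?c = "ancestor_pairs 0 n"
  have "ancestor_pairs 0 (Suc n) = ?c * (1 + 2 * \<alpha> / n) + 1"
    using Suc by (simp add: ancestor_pairs_Suc)
  also have "\<dots> \<le> ?c * (1 + 1 / n) + 1"
    using assms(1) ancestor_pairs_nonneg Suc
    by (intro add_right_mono mult_left_mono) (auto simp: divide_right_mono)
  also have "\<dots> \<le> (real n * harm n) * (1 + 1 / n) + 1"
    using Suc by (intro add_right_mono mult_right_mono) auto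
  also have "\<dots> = real (Suc n) * harm (Suc n)"
    using Suc by (simp add: harm_Suc field_simps)
  finally show ?case .
qed

lemma ancestor_pairs_superadditive:
  assumes "lo \<le> mid" "mid \<le> hi"
  shows "ancestor_pairs lo mid + ancestor_pairs mid hi \<le> ancestor_pairs lo hi"
proof -
  let ?A = "{lo<..mid}" and ?B = "{mid<..hi}"
  let ?s = "\<lambda>I J. \<Sum>i\<in>I. \<Sum>i'\<in>J. same_ancestor_prob i i'"
  have "{lo<..hi} = ?A \<union> ?B" "?A \<inter> ?B = {}" using assms by auto
  then have "ancestor_pairs lo hi = ?s ?A ?A + ?s ?A ?B + (?s ?B ?A + ?s ?B ?B)"
    by (simp add: ancestor_pairs_def sum.union_disjoint sum.distrib)
  moreover have "0 \<le> ?s ?A ?B" "0 \<le> ?s ?B ?A" by (intro sum_nonneg same_ancestor_prob_nonneg)+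
  ultimately show ?thesis by (simp add: ancestor_pairs_def)
qed

definition partial_sum :: "(real ^ 'd \<Rightarrow> real) \<Rightarrow> 'a \<Rightarrow> nat \<Rightarrow> real" where
  "partial_sum f \<omega> n = (\<Sum>i\<in>{0<..n}. f (Xanc i \<omega>))"

lemma partial_sum_0 [simp]: "partial_sum f \<omega> 0 = 0"
  by (simp add: partial_sum_def)

lemma partial_sum_diff:
  assumes "lo \<le> hi"
  shows "partial_sum f \<omega> hi - partial_sum f \<omega> lo = (\<Sum>i\<in>{lo<..hi}. f (Xanc i \<omega>))"
proof -
  have "{0<..hi} = {0<..lo} \<union> {lo<..hi}" "{0<..lo} \<inter> {lo<..hi} = {}" using assms by auto
  then show ?thesis unfolding partial_sum_def by (simp add: sum.union_disjoint)
qed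

lemma measurable_partial_sum [measurable]:
  "f \<in> borel_measurable borel \<Longrightarrow> (\<lambda>\<omega>. partial_sum f \<omega> n) \<in> borel_measurable M"
  unfolding partial_sum_def by (intro borel_measurable_sum measurable_compose[OF measurable_Xanc]) auto

lemma abs_partial_sum_le:
  assumes "\<And>x. \<bar>f x\<bar> \<le> B"
  shows "\<bar>partial_sum f \<omega> n\<bar> \<le> real n * B"
proof -
  have "\<bar>partial_sum f \<omega> n\<bar> \<le> (\<Sum>i\<in>{0<..n}. \<bar>f (Xanc i \<omega>)\<bar>)"
    unfolding partial_sum_def by (rule sum_abs)
  also have "\<dots> \<le> (\<Sum>i\<in>{0<..n}. B)" using assms by (intro sum_mono)
  finally show ?thesis by simp
qed

context
  fixes f :: "real ^ 'd \<Rightarrow> real" and B :: real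
  assumes f: "f \<in> borel_measurable borel" "\<And>x. \<bar>f x\<bar> \<le> B" and f_mean: "(\<integral>x. f x \<partial>\<mu>) = 0"
begin

lemma integrable_square_partial_sum_diff:
  "integrable M (\<lambda>\<omega>. (partial_sum f \<omega> hi - partial_sum f \<omega> lo)\<^sup>2)"
proof (intro integrable_const_bound[where B="(real hi * B + real lo * B)\<^sup>2"] AE_I2)
  fix \<omega>
  have "\<bar>partial_sum f \<omega> hi - partial_sum f \<omega> lo\<bar> \<le> real hi * B + real lo * B"
    using abs_partial_sum_le[of f B \<omega> hi, OF f(2)] abs_partial_sum_le[of f B \<omega> lo, OF f(2)]
    by linarith
  then have "\<bar>partial_sum f \<omega> hi - partial_sum f \<omega> lo\<bar>\<^sup>2 \<le> (real hi * B + real lo * B)\<^sup>2"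
    by (rule power_mono) simp
  then show "norm ((partial_sum f \<omega> hi - partial_sum f \<omega> lo)\<^sup>2) \<le> (real hi * B + real lo * B)\<^sup>2"
    by (simp add: power2_abs)
qed (use f(1) in measurable)

lemma integral_square_partial_sum_diff:
  "lo \<le> hi \<Longrightarrow> (\<integral>\<omega>. (partial_sum f \<omega> hi - partial_sum f \<omega> lo)\<^sup>2 \<partial>M) =
     (\<integral>x. (f x)\<^sup>2 \<partial>\<mu>) * ancestor_pairs lo hi"
  using integral_square_sum_Xanc[OF f f_mean] by (simp add: partial_sum_diff)

lemma integrable_dyadic_square_sum: "integrable M (\<lambda>\<omega>. dyadic_square_sum (partial_sum f \<omega>) L lo)"
  by (induction L arbitrary: lo) (simp_all add: integrable_square_partial_sum_diff)

lemma integral_dyadic_square_sum_le: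
  "(\<integral>\<omega>. dyadic_square_sum (partial_sum f \<omega>) L lo \<partial>M) \<le>
     (real L + 1) * ((\<integral>x. (f x)\<^sup>2 \<partial>\<mu>) * ancestor_pairs lo (lo + 2 ^ L))"
proof (induction L arbitrary: lo)
  case 0
  then show ?case by (simp add: integral_square_partial_sum_diff)
next
  case (Suc L)
  let ?K = "\<integral>x. (f x)\<^sup>2 \<partial>\<mu>" and ?c = "ancestor_pairs"
  let ?mid = "lo + 2 ^ L"
  have "?c lo ?mid + ?c ?mid (?mid + 2 ^ L) \<le> ?c lo (lo + 2 ^ Suc L)"
    using ancestor_pairs_superadditive[of lo ?mid "?mid + 2 ^ L"] by (simp add: add.assoc mult_2)
  then have split: "?K * ?c lo ?mid + ?K * ?c ?mid (?mid + 2 ^ L) \<le> ?K * ?c lo (lo + 2 ^ Suc L)"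
    by (simp add: distrib_left[symmetric] mult_left_mono)
  have "(\<integral>\<omega>. dyadic_square_sum (partial_sum f \<omega>) (Suc L) lo \<partial>M) =
      (\<integral>\<omega>. (partial_sum f \<omega> (lo + 2 ^ Suc L) - partial_sum f \<omega> lo)\<^sup>2 \<partial>M)
      + (\<integral>\<omega>. dyadic_square_sum (partial_sum f \<omega>) L lo \<partial>M)
      + (\<integral>\<omega>. dyadic_square_sum (partial_sum f \<omega>) L ?mid \<partial>M)"
    using integrable_square_partial_sum_diff integrable_dyadic_square_sum by simp
  also have "\<dots> = ?K * ?c lo (lo + 2 ^ Suc L) + (\<integral>\<omega>. dyadic_square_sum (partial_sum f \<omega>) L lo \<partial>M)
      + (\<integral>\<omega>. dyadic_square_sum (partial_sum f \<omega>) L ?mid \<partial>M)"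
    by (simp only: integral_square_partial_sum_diff le_add1)
  also have "\<dots> \<le> ?K * ?c lo (lo + 2 ^ Suc L) + (real L + 1) * (?K * ?c lo ?mid)
      + (real L + 1) * (?K * ?c ?mid (?mid + 2 ^ L))"
    using Suc.IH[of lo] Suc.IH[of ?mid] by simp
  also have "\<dots> \<le> (real (Suc L) + 1) * (?K * ?c lo (lo + 2 ^ Suc L))"
    using mult_left_mono[OF split, of "real L + 1"] by (simp add: algebra_simps)
  finally show ?case .
qed

lemma integral_dyadic_square_sum_partial_sum_le:
  assumes "\<alpha> \<le> 1/2"
  shows "(\<integral>\<omega>. dyadic_square_sum (partial_sum f \<omega>) L 0 \<partial>M) \<le>
     (real L + 1)\<^sup>2 * (\<integral>x. (f x)\<^sup>2 \<partial>\<mu>) * 2 ^ L"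
proof -
  let ?K = "\<integral>x. (f x)\<^sup>2 \<partial>\<mu>"
  have "harm (2 ^ L) \<le> 1 + ln (real (2 ^ L))" by (rule harm_le_one_plus_ln) simp
  also have "ln (real ((2::nat) ^ L)) = real L * ln 2" by (simp add: ln_realpow)
  also have "real L * ln 2 \<le> real L" using ln_2_less_1 by (simp add: mult_left_le)
  finally have "harm (2 ^ L) \<le> real L + 1" by simp
  then have pairs: "ancestor_pairs 0 (2 ^ L) \<le> 2 ^ L * (real L + 1)"
    using order_trans[OF ancestor_pairs_le[OF assms, of "2 ^ L"] mult_left_mono] by simp
  have "(\<integral>\<omega>. dyadic_square_sum (partial_sum f \<omega>) L 0 \<partial>M) \<le> (real L + 1) * (?K * ancestor_pairs 0 (2 ^ L))"
    using integral_dyadic_square_sum_le[of L 0] by simp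
  also have "\<dots> \<le> (real L + 1) * (?K * (2 ^ L * (real L + 1)))"
    using pairs by (intro mult_left_mono) auto
  finally show ?thesis by (simp add: power2_eq_square algebra_simps)
qed

end

end

section \<open>A Marcinkiewicz-Zygmund law for one observable\<close>

locale srrw_observable = srrw_process M \<mu> \<alpha> Y X \<xi> U
  for M :: "'a measure" and \<mu> :: "(real ^ 'd) measure" and \<alpha> :: real
    and Y X :: "nat \<Rightarrow> 'a \<Rightarrow> real ^ 'd" and \<xi> :: "nat \<Rightarrow> 'a \<Rightarrow> bool" and U :: "nat \<Rightarrow> 'a \<Rightarrow> nat" +
  fixes h :: "real ^ 'd \<Rightarrow> real" and p :: real
  assumes measurable_h [measurable]: "h \<in> borel_measurable borel"
    and integrable_h: "integrable \<mu> h" and integral_h: "(\<integral>x. h x \<partial>\<mu>) = 0"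
    and integrable_h_powr: "integrable \<mu> (\<lambda>x. \<bar>h x\<bar> powr p)"
    and p_gt_1: "1 < p" and p_le_2: "p \<le> 2"
    and alpha_le_half: "\<alpha> \<le> 1/2"
begin

definition trunc :: "real \<Rightarrow> real ^ 'd \<Rightarrow> real" where
  "trunc t x = (if \<bar>h x\<bar> \<le> t then h x else 0)"

definition excess :: "real \<Rightarrow> real ^ 'd \<Rightarrow> real" where
  "excess t x = (if \<bar>h x\<bar> \<le> t then 0 else h x)"

definition trunc_mean :: "real \<Rightarrow> real" where
  "trunc_mean t = (\<integral>x. trunc t x \<partial>\<mu>)"

definition trunc_centered :: "real \<Rightarrow> real ^ 'd \<Rightarrow> real" where
  "trunc_centered t x = trunc t x - trunc_mean t"

definition moment :: real where
  "moment = (\<integral>x. \<bar>h x\<bar> powr p \<partial>\<mu>)"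

lemma measurable_trunc [measurable]: "trunc t \<in> borel_measurable borel"
  and measurable_excess [measurable]: "excess t \<in> borel_measurable borel"
  and measurable_trunc_centered [measurable]: "trunc_centered t \<in> borel_measurable borel"
  unfolding trunc_def excess_def trunc_centered_def by measurable

lemma integrable_trunc: "integrable \<mu> (trunc t)"
  and integrable_excess: "integrable \<mu> (excess t)"
  by (auto intro!: Bochner_Integration.integrable_bound[OF integrable_h]
      simp: trunc_def excess_def measurable_step_eq_borel)

lemma h_eq_trunc_plus_excess: "h x = trunc t x + excess t x"
  by (simp add: trunc_def excess_def)

lemma moment_nonneg: "0 \<le> moment"
  unfolding moment_def by simp

lemma trunc_mean_eq: "trunc_mean t = - (\<integral>x. excess t x \<partial>\<mu>)"
proof -
  have "0 = (\<integral>x. trunc t x + excess t x \<partial>\<mu>)"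
    using integral_h by (simp add: h_eq_trunc_plus_excess[symmetric])
  then show ?thesis
    unfolding trunc_mean_def using integrable_trunc integrable_excess by simp
qed

lemma abs_excess_le:
  assumes "0 < t"
  shows "\<bar>excess t x\<bar> \<le> \<bar>h x\<bar> powr p * t powr (1 - p)"
proof (cases "\<bar>h x\<bar> \<le> t")
  case False
  then have "\<bar>h x\<bar> powr (1 - p) \<le> t powr (1 - p)"
    using assms p_gt_1 by (intro powr_mono2') auto
  then have "\<bar>h x\<bar> powr p * \<bar>h x\<bar> powr (1 - p) \<le> \<bar>h x\<bar> powr p * t powr (1 - p)"
    by (rule mult_left_mono) simp
  moreover have "\<bar>h x\<bar> powr p * \<bar>h x\<bar> powr (1 - p) = \<bar>h x\<bar>"
    using False assms by (simp flip: powr_add)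
  ultimately show ?thesis using False by (simp add: excess_def)
qed (simp add: excess_def)

lemma trunc_square_le:
  assumes "0 < t"
  shows "(trunc t x)\<^sup>2 \<le> \<bar>h x\<bar> powr p * t powr (2 - p)"
proof (cases "\<bar>h x\<bar> \<le> t \<and> h x \<noteq> 0")
  case True
  have "(trunc t x)\<^sup>2 = \<bar>h x\<bar> powr p * \<bar>h x\<bar> powr (2 - p)"
    using True by (simp add: trunc_def powr_numeral flip: powr_add)
  also have "\<dots> \<le> \<bar>h x\<bar> powr p * t powr (2 - p)"
    using True p_le_2 by (intro mult_left_mono powr_mono2) auto
  finally show ?thesis .
qed (auto simp: trunc_def)

lemma integral_abs_excess_le:
  assumes "0 < t"
  shows "(\<integral>x. \<bar>excess t x\<bar> \<partial>\<mu>) \<le> moment * t powr (1 - p)"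
proof -
  have "(\<integral>x. \<bar>excess t x\<bar> \<partial>\<mu>) \<le> (\<integral>x. \<bar>h x\<bar> powr p * t powr (1 - p) \<partial>\<mu>)"
    using integrable_excess integrable_h_powr abs_excess_le[OF assms] by (intro integral_mono) auto
  then show ?thesis by (simp add: moment_def)
qed

lemma abs_trunc_mean_le_moment:
  assumes "0 < t"
  shows "\<bar>trunc_mean t\<bar> \<le> moment * t powr (1 - p)"
  using order_trans[OF integral_abs_bound integral_abs_excess_le[OF assms]]
  by (simp add: trunc_mean_eq)

lemma abs_trunc_centered_le:
  assumes "0 \<le> t"
  shows "\<bar>trunc_centered t x\<bar> \<le> 2 * t"
proof -
  have "\<bar>trunc_mean t\<bar> \<le> (\<integral>x. \<bar>trunc t x\<bar> \<partial>\<mu>)"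
    unfolding trunc_mean_def by (rule integral_abs_bound)
  also have "\<dots> \<le> (\<integral>x. t \<partial>\<mu>)"
    using assms by (intro integral_mono integrable_abs integrable_trunc) (auto simp: trunc_def)
  finally show ?thesis
    using assms by (simp add: trunc_centered_def trunc_def step.prob_space abs_if split: if_splits)
qed

lemma integral_trunc_centered: "(\<integral>x. trunc_centered t x \<partial>\<mu>) = 0"
  unfolding trunc_centered_def trunc_mean_def using integrable_trunc by (simp add: step.prob_space)

lemma integral_trunc_centered_square_le:
  assumes "0 < t"
  shows "(\<integral>x. (trunc_centered t x)\<^sup>2 \<partial>\<mu>) \<le> moment * t powr (2 - p)"
proof -
  have trunc_sq: "integrable \<mu> (\<lambda>x. (trunc t x)\<^sup>2)"
    using assms
    by (intro step.integrable_const_bound[where B="t\<^sup>2"] AE_I2)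
      (auto simp: trunc_def abs_le_square_iff[symmetric] measurable_step_eq_borel)
  have "(\<integral>x. (trunc_centered t x)\<^sup>2 \<partial>\<mu>) = (\<integral>x. (trunc t x)\<^sup>2 \<partial>\<mu>) - (trunc_mean t)\<^sup>2"
    using step.variance_eq[OF integrable_trunc trunc_sq] by (simp add: trunc_centered_def trunc_mean_def)
  also have "\<dots> \<le> (\<integral>x. (trunc t x)\<^sup>2 \<partial>\<mu>)" by simp
  also have "\<dots> \<le> (\<integral>x. \<bar>h x\<bar> powr p * t powr (2 - p) \<partial>\<mu>)"
    using trunc_sq integrable_h_powr trunc_square_le[OF assms] by (intro integral_mono) auto
  finally show ?thesis by (simp add: moment_def)
qed

lemma partial_sum_decompose:
  "partial_sum h \<omega> n = partial_sum (trunc_centered t) \<omega> n + real n * trunc_mean t + partial_sum (excess t) \<omega> n"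
  unfolding partial_sum_def trunc_centered_def
  by (simp add: sum.distrib sum_subtractf h_eq_trunc_plus_excess[of _ t] algebra_simps)

end

context srrw_observable
begin

lemma integrable_partial_sum: "integrable M (\<lambda>\<omega>. partial_sum h \<omega> n)"
  unfolding partial_sum_def by (auto intro!: Bochner_Integration.integrable_sum integrable_Xanc integrable_h)

text \<open>Block \<open>L\<close> is the range of times \<open>2^(L-1) < n \<le> 2^L\<close>; within it the observable is
  truncated at \<open>2^(L/p)\<close>.\<close>

definition truncation_level :: "nat \<Rightarrow> real" where
  "truncation_level L = 2 powr (real L / p)"

lemma truncation_level_pos: "0 < truncation_level L"
  by (simp add: truncation_level_def)

lemma mult_level_powr_le:
  assumes "1 \<le> n" "n \<le> (2::nat) ^ L"
  shows "real n * truncation_level L powr (1 - p) \<le> real n powr (1 / p)"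
proof -
  have "truncation_level L powr (1 - p) = real (2 ^ L) powr ((1 - p) / p)"
    unfolding truncation_level_def by (simp add: powr_powr powr_realpow[symmetric])
  also have "\<dots> \<le> real n powr ((1 - p) / p)"
    using assms p_gt_1 by (intro powr_mono2') (auto simp: divide_nonpos_pos)
  finally have "real n * truncation_level L powr (1 - p) \<le> real n * real n powr ((1 - p) / p)"
    by (intro mult_left_mono) auto
  also have "\<dots> = real n powr (1 + (1 - p) / p)"
    using assms by (simp add: powr_add)
  also have "1 + (1 - p) / p = 1 / p"
    using p_gt_1 by (simp add: field_simps)
  finally show ?thesis .
qed

definition large_value_event :: "nat \<Rightarrow> 'a set" where
  "large_value_event L = {\<omega>\<in>space M. \<exists>i\<in>{0<..(2::nat) ^ L}. 2 ^ L < \<bar>h (Xanc i \<omega>)\<bar> powr p}"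

lemma large_value_event_sets [measurable]: "large_value_event L \<in> sets M"
proof -
  have "large_value_event L = (\<Union>i\<in>{0<..(2::nat) ^ L}. {\<omega>\<in>space M. 2 ^ L < \<bar>h (Xanc i \<omega>)\<bar> powr p})"
    unfolding large_value_event_def by auto
  also have "\<dots> \<in> sets M" by (intro sets.finite_UN) auto
  finally show ?thesis .
qed

lemma prob_large_value_event_le:
  "prob (large_value_event L) \<le> 2 ^ L * measure \<mu> {x. 2 ^ L < \<bar>h x\<bar> powr p}"
proof -
  have "{x. 2 ^ L < \<bar>h x\<bar> powr p} \<in> sets borel" by measurable
  moreover have "large_value_event L =
      (\<Union>i\<in>{0<..(2::nat) ^ L}. {\<omega>\<in>space M. Xanc i \<omega> \<in> {x. 2 ^ L < \<bar>h x\<bar> powr p}})"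
    unfolding large_value_event_def by auto
  ultimately have "prob (large_value_event L) \<le>
      (\<Sum>i\<in>{0<..(2::nat) ^ L}. prob {\<omega>\<in>space M. Xanc i \<omega> \<in> {x. 2 ^ L < \<bar>h x\<bar> powr p}})"
    by (auto intro!: measure_UNION_le)
  also have "\<dots> = (\<Sum>i\<in>{0<..(2::nat) ^ L}. measure \<mu> {x. 2 ^ L < \<bar>h x\<bar> powr p})"
    using \<open>{x. 2 ^ L < \<bar>h x\<bar> powr p} \<in> sets borel\<close> by (intro sum.cong refl prob_Xanc) auto
  finally show ?thesis by simp
qed

text \<open>\<open>\<Sum>\<^sub>L 2^L \<mu>{|h|^p > 2^L} \<le> 2 E|h|^p\<close>, a dyadic version of the tail-sum formula.\<close>

lemma summable_prob_large_value_event: "summable (\<lambda>L. prob (large_value_event L))"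
proof (rule summable_comparison_test'[where N=0])
  let ?A = "\<lambda>L. {x. 2 ^ L < \<bar>h x\<bar> powr p}"
  have A: "?A L \<in> sets \<mu>" for L
  proof -
    have "{x \<in> space borel. 2 ^ L < \<bar>h x\<bar> powr p} \<in> sets borel" by measurable
    then show ?thesis by (simp add: sets_step)
  qed
  show "summable (\<lambda>L. 2 ^ L * measure \<mu> (?A L))"
  proof (rule summableI_nonneg_bounded[where x="2 * moment"])
    fix N
    have "(\<Sum>L<N. 2 ^ L * measure \<mu> (?A L)) = (\<Sum>L<N. \<integral>x. 2 ^ L * indicator (?A L) x \<partial>\<mu>)"
      using A by (intro sum.cong refl) (simp add: step.emeasure_eq_measure)
    also have "\<dots> = (\<integral>x. (\<Sum>L<N. 2 ^ L * indicator (?A L) x) \<partial>\<mu>)"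
      using A by (intro Bochner_Integration.integral_sum[symmetric] integrable_mult_right)
        (simp add: step.emeasure_eq_measure)
    also have "\<dots> \<le> (\<integral>x. 2 * \<bar>h x\<bar> powr p \<partial>\<mu>)"
      using A integrable_h_powr
      by (intro integral_mono Bochner_Integration.integrable_sum integrable_mult_right)
        (auto simp: step.emeasure_eq_measure intro!: sum_powers_of_two_below_le)
    finally show "(\<Sum>L<N. 2 ^ L * measure \<mu> (?A L)) \<le> 2 * moment" by (simp add: moment_def)
  qed simp
  show "norm (prob (large_value_event L)) \<le> 2 ^ L * measure \<mu> (?A L)" for L
    using prob_large_value_event_le by simp
qed

lemma abs_h_Xanc_le_level:
  assumes "\<omega> \<in> space M" "\<omega> \<notin> large_value_event L" "i \<in> {0<..(2::nat) ^ L}"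
  shows "\<bar>h (Xanc i \<omega>)\<bar> \<le> truncation_level L"
proof -
  have "\<bar>h (Xanc i \<omega>)\<bar> powr p \<le> 2 ^ L"
    using assms unfolding large_value_event_def by (auto simp: not_less)
  then have "(\<bar>h (Xanc i \<omega>)\<bar> powr p) powr (1 / p) \<le> (2 ^ L) powr (1 / p)"
    using p_gt_1 by (intro powr_mono2) auto
  then show ?thesis
    using p_gt_1 by (simp add: truncation_level_def powr_powr powr_realpow[symmetric])
qed

text \<open>Halving makes the threshold at most \<open>n\<^bsup>1-v\<^esup>\<close> on the whole block \<open>2^(L-1) < n \<le> 2^L\<close>.\<close>

definition sum_threshold :: "real \<Rightarrow> nat \<Rightarrow> real" where
  "sum_threshold v L = 2 powr (real L * (1 - v)) / 2"

definition large_sum_event :: "real \<Rightarrow> nat \<Rightarrow> 'a set" where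
  "large_sum_event v L = {\<omega>\<in>space M. (sum_threshold v L)\<^sup>2 \<le>
     (real L + 1) * dyadic_square_sum (partial_sum (trunc_centered (truncation_level L)) \<omega>) L 0}"

lemma abs_trunc_centered_level_le: "\<bar>trunc_centered (truncation_level L) x\<bar> \<le> 2 * truncation_level L"
  using abs_trunc_centered_le truncation_level_pos less_imp_le by blast

lemma integrable_dyadic_square_sum_level:
  "integrable M (\<lambda>\<omega>. dyadic_square_sum (partial_sum (trunc_centered (truncation_level L)) \<omega>) L 0)"
  by (rule integrable_dyadic_square_sum[OF measurable_trunc_centered abs_trunc_centered_level_le
        integral_trunc_centered])

lemma large_sum_event_sets [measurable]: "large_sum_event v L \<in> sets M"
proof -
  have [measurable]: "(\<lambda>\<omega>. dyadic_square_sum (partial_sum (trunc_centered (truncation_level L)) \<omega>) L 0)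
      \<in> borel_measurable M"
    using integrable_dyadic_square_sum_level by (rule borel_measurable_integrable)
  show ?thesis unfolding large_sum_event_def by measurable
qed

lemma prob_large_sum_event_le:
  "prob (large_sum_event v L) \<le> 4 * moment * (real L + 1) ^ 3 * 2 powr (- (2 * (1 - 1 / p - v)) * real L)"
proof -
  let ?t = "truncation_level L" and ?thr = "sum_threshold v L"
  let ?Z = "\<lambda>\<omega>. (real L + 1) * dyadic_square_sum (partial_sum (trunc_centered ?t) \<omega>) L 0"
  have thr: "0 < ?thr" by (simp add: sum_threshold_def)
  have "prob (large_sum_event v L) \<le> (\<integral>\<omega>. ?Z \<omega> \<partial>M) / ?thr\<^sup>2"
    unfolding large_sum_event_def using integrable_dyadic_square_sum_level thr
    by (intro integral_Markov_inequality_measure[where A="space M"])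
      (auto intro!: mult_nonneg_nonneg dyadic_square_sum_nonneg)
  also have "\<dots> \<le> (real L + 1) * ((real L + 1)\<^sup>2 * (moment * ?t powr (2 - p)) * 2 ^ L) / ?thr\<^sup>2"
  proof (intro divide_right_mono)
    have "(\<integral>\<omega>. ?Z \<omega> \<partial>M) \<le> (real L + 1) * ((real L + 1)\<^sup>2 * (\<integral>x. (trunc_centered ?t x)\<^sup>2 \<partial>\<mu>) * 2 ^ L)"
      using integral_dyadic_square_sum_partial_sum_le[OF measurable_trunc_centered
          abs_trunc_centered_level_le integral_trunc_centered alpha_le_half]
      by (simp add: mult_left_mono)
    also have "\<dots> \<le> (real L + 1) * ((real L + 1)\<^sup>2 * (moment * ?t powr (2 - p)) * 2 ^ L)"
      using integral_trunc_centered_square_le[OF truncation_level_pos]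
      by (intro mult_left_mono mult_right_mono) auto
    finally show "(\<integral>\<omega>. ?Z \<omega> \<partial>M) \<le> \<dots>" .
  qed simp
  also have "\<dots> = 4 * moment * (real L + 1) ^ 3 *
      2 powr (real L / p * (2 - p) + real L - 2 * (real L * (1 - v)))"
    by (simp add: truncation_level_def sum_threshold_def powr_powr power2_eq_square power3_eq_cube
        powr_add[symmetric] powr_diff powr_realpow[symmetric] field_simps)
  also have "real L / p * (2 - p) + real L - 2 * (real L * (1 - v)) = - (2 * (1 - 1 / p - v)) * real L"
    using p_gt_1 by (simp add: field_simps)
  finally show ?thesis .
qed

lemma summable_prob_large_sum_event:
  assumes "v < 1 - 1 / p"
  shows "summable (\<lambda>L. prob (large_sum_event v L))"
proof (rule summable_comparison_test'[where N=0])
  have "0 < 2 * (1 - 1 / p - v)" using assms by simp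
  from summable_mult[OF summable_poly_times_exp2_neg[OF this], of "4 * moment"]
  show "summable (\<lambda>L. 4 * moment * (real L + 1) ^ 3 * 2 powr (- (2 * (1 - 1 / p - v)) * real L))"
    by (simp add: mult.assoc)
  show "norm (prob (large_sum_event v L)) \<le>
      4 * moment * (real L + 1) ^ 3 * 2 powr (- (2 * (1 - 1 / p - v)) * real L)" for L
    using prob_large_sum_event_le by simp
qed

lemma abs_partial_sum_le_outside_large_events:
  assumes \<omega>: "\<omega> \<in> space M" "\<omega> \<notin> large_value_event L" "\<omega> \<notin> large_sum_event v L"
    and L: "1 \<le> L" "2 ^ (L - 1) < n" "n \<le> (2::nat) ^ L"
    and v: "0 < v" "v < 1 - 1 / p"
  shows "\<bar>partial_sum h \<omega> n\<bar> \<le> real n powr (1 - v) + moment * real n powr (1 / p)"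
proof -
  let ?t = "truncation_level L"
  let ?S = "partial_sum (trunc_centered ?t) \<omega>"
  have "partial_sum (excess ?t) \<omega> n = 0"
    unfolding partial_sum_def
    using abs_h_Xanc_le_level[OF \<omega>(1,2)] L(3) by (intro sum.neutral) (auto simp: excess_def)
  then have decomp: "partial_sum h \<omega> n = ?S n + real n * trunc_mean ?t"
    using partial_sum_decompose[of \<omega> n ?t] by simp
  have "(?S (0 + n) - ?S 0)\<^sup>2 \<le> (real L + 1) * dyadic_square_sum ?S L 0"
    using L(3) by (intro dyadic_chaining) simp
  also have "\<dots> < (sum_threshold v L)\<^sup>2"
    using \<omega> by (simp add: large_sum_event_def not_le)
  finally have "\<bar>?S n\<bar>\<^sup>2 < (sum_threshold v L)\<^sup>2" by (simp add: power2_abs)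
  then have "\<bar>?S n\<bar> < sum_threshold v L"
    by (rule power_less_imp_less_base) (simp add: sum_threshold_def)
  also have "sum_threshold v L \<le> real n powr (1 - v)"
  proof -
    have "0 < 1 / p" using p_gt_1 by simp
    then have "v \<le> 1" using v(2) by linarith
    then show ?thesis unfolding sum_threshold_def using L v(1) by (intro half_two_powr_le_powr) auto
  qed
  finally have truncated: "\<bar>?S n\<bar> \<le> real n powr (1 - v)" by simp
  have "\<bar>real n * trunc_mean ?t\<bar> \<le> real n * (moment * ?t powr (1 - p))"
    using abs_trunc_mean_le_moment[OF truncation_level_pos] by (simp add: abs_mult mult_left_mono)
  also have "\<dots> = moment * (real n * ?t powr (1 - p))" by simp
  also have "\<dots> \<le> moment * real n powr (1 / p)"
    using mult_level_powr_le[of n L] L moment_nonneg by (intro mult_left_mono) auto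
  finally show ?thesis using decomp truncated by linarith
qed

lemma AE_abs_partial_sum_le:
  assumes v: "0 < v" "v < 1 - 1 / p"
  shows "AE \<omega> in M. eventually (\<lambda>n. \<bar>partial_sum h \<omega> n\<bar> \<le> real n powr (1 - v) + moment * real n powr (1 / p))
    sequentially"
proof -
  have "AE \<omega> in M. eventually (\<lambda>L. \<omega> \<in> space M - large_value_event L) sequentially"
    by (rule borel_cantelli_AE1[OF large_value_event_sets _ summable_prob_large_value_event])
      (simp add: less_top[symmetric])
  moreover have "AE \<omega> in M. eventually (\<lambda>L. \<omega> \<in> space M - large_sum_event v L) sequentially"
    by (rule borel_cantelli_AE1[OF large_sum_event_sets _ summable_prob_large_sum_event[OF v(2)]])
      (simp add: less_top[symmetric])
  ultimately show ?thesis
  proof eventually_elim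
    case (elim \<omega>)
    obtain L0 where L0: "\<And>L. L0 \<le> L \<Longrightarrow> \<omega> \<in> space M - large_value_event L \<and> \<omega> \<in> space M - large_sum_event v L"
      using eventually_conj[OF elim] unfolding eventually_sequentially by blast
    show ?case unfolding eventually_sequentially
    proof (intro exI allI impI)
      fix n :: nat assume n: "2 ^ L0 + 2 \<le> n"
      then obtain L where L: "1 \<le> L" "2 ^ (L - 1) < n" "n \<le> (2::nat) ^ L"
        using dyadic_bracket[of n] by auto
      have "L0 \<le> L"
      proof (rule ccontr)
        assume "\<not> L0 \<le> L"
        then have "(2::nat) ^ L \<le> 2 ^ L0" by (intro power_increasing) auto
        then show False using L n by linarith
      qed
      then show "\<bar>partial_sum h \<omega> n\<bar> \<le> real n powr (1 - v) + moment * real n powr (1 / p)"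
        using L0 L v by (intro abs_partial_sum_le_outside_large_events) auto
    qed
  qed
qed

lemma integral_abs_partial_sum_trunc_centered_le:
  assumes n: "1 \<le> n" and t: "0 < t"
  shows "(\<integral>\<omega>. \<bar>partial_sum (trunc_centered t) \<omega> n\<bar> \<partial>M) \<le>
    sqrt (moment * t powr (2 - p) * (real n * (1 + ln (real n))))"
proof -
  have bound: "\<bar>trunc_centered t x\<bar> \<le> 2 * t" for x using abs_trunc_centered_le t by simp
  let ?B = "real n * (2 * t)"
  have "(\<integral>\<omega>. \<bar>partial_sum (trunc_centered t) \<omega> n\<bar> \<partial>M) \<le>
      sqrt (\<integral>\<omega>. (partial_sum (trunc_centered t) \<omega> n)\<^sup>2 \<partial>M)"
  proof (rule integral_abs_le_sqrt_integral_square)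
    show "integrable M (\<lambda>\<omega>. partial_sum (trunc_centered t) \<omega> n)"
      using abs_partial_sum_le[OF bound] by (intro integrable_const_bound[where B="?B"] AE_I2) auto
    show "integrable M (\<lambda>\<omega>. (partial_sum (trunc_centered t) \<omega> n)\<^sup>2)"
      using integrable_square_partial_sum_diff[OF measurable_trunc_centered bound integral_trunc_centered,
          of n 0] by simp
  qed
  also have "(\<integral>\<omega>. (partial_sum (trunc_centered t) \<omega> n)\<^sup>2 \<partial>M) =
      (\<integral>x. (trunc_centered t x)\<^sup>2 \<partial>\<mu>) * ancestor_pairs 0 n"
    using integral_square_partial_sum_diff[OF measurable_trunc_centered bound integral_trunc_centered, of 0 n]
    by simp
  also have "\<dots> \<le> moment * t powr (2 - p) * (real n * (1 + ln (real n)))"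
  proof (rule mult_mono)
    have "ancestor_pairs 0 n \<le> real n * harm n" by (rule ancestor_pairs_le[OF alpha_le_half n])
    also have "\<dots> \<le> real n * (1 + ln (real n))" using harm_le_one_plus_ln[OF n] by (intro mult_left_mono) auto
    finally show "ancestor_pairs 0 n \<le> real n * (1 + ln (real n))" .
  qed (use integral_trunc_centered_square_le[OF t] moment_nonneg ancestor_pairs_nonneg in auto)
  finally show ?thesis by simp
qed

lemma integral_abs_partial_sum_excess_le:
  assumes "0 < t"
  shows "(\<integral>\<omega>. \<bar>partial_sum (excess t) \<omega> n\<bar> \<partial>M) \<le> real n * (moment * t powr (1 - p))"
proof -
  have int: "integrable M (\<lambda>\<omega>. \<bar>excess t (Xanc i \<omega>)\<bar>)" if "i \<in> {0<..n}" for i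
    using that by (intro integrable_Xanc integrable_abs integrable_excess) auto
  have "(\<integral>\<omega>. \<bar>partial_sum (excess t) \<omega> n\<bar> \<partial>M) \<le> (\<integral>\<omega>. (\<Sum>i\<in>{0<..n}. \<bar>excess t (Xanc i \<omega>)\<bar>) \<partial>M)"
    unfolding partial_sum_def
    by (intro integral_mono integrable_abs Bochner_Integration.integrable_sum sum_abs int
        integrable_Xanc integrable_excess) auto
  also have "\<dots> = (\<Sum>i\<in>{0<..n}. \<integral>\<omega>. \<bar>excess t (Xanc i \<omega>)\<bar> \<partial>M)"
    using int by (rule Bochner_Integration.integral_sum)
  also have "\<dots> = (\<Sum>i\<in>{0<..n}. \<integral>x. \<bar>excess t x\<bar> \<partial>\<mu>)"
    by (intro sum.cong refl integral_Xanc) auto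
  also have "\<dots> \<le> real n * (moment * t powr (1 - p))"
    using sum_mono[of "{0<..n}", OF integral_abs_excess_le[OF assms]] by simp
  finally show ?thesis .
qed

lemma integral_abs_partial_sum_le:
  assumes n: "1 \<le> n"
  shows "(\<integral>\<omega>. \<bar>partial_sum h \<omega> n\<bar> \<partial>M) \<le> real n powr (1 / p) * (sqrt (moment * (1 + ln (real n))) + 2 * moment)"
proof -
  define t where "t = real n powr (1 / p)"
  have t: "0 < t" using n by (simp add: t_def)
  have n_t: "real n * t powr (1 - p) = t" and n_t2: "real n * t powr (2 - p) = t\<^sup>2"
    using mult_root_powr[of "real n" p] n p_gt_1 by (simp_all add: t_def)
  have n_mean: "real n * (moment * t powr (1 - p)) = t * moment"
    using n_t by (metis mult.commute mult.left_commute)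
  let ?A = "\<lambda>\<omega>. \<bar>partial_sum (trunc_centered t) \<omega> n\<bar>" and ?E = "\<lambda>\<omega>. \<bar>partial_sum (excess t) \<omega> n\<bar>"
  have int_A: "integrable M ?A"
    using abs_partial_sum_le[of "trunc_centered t" "2 * t"] abs_trunc_centered_le t
    by (intro integrable_const_bound[where B="real n * (2 * t)"] AE_I2) auto
  have int_E: "integrable M ?E"
    unfolding partial_sum_def
    by (intro integrable_abs Bochner_Integration.integrable_sum integrable_Xanc integrable_excess) auto
  have "(\<integral>\<omega>. \<bar>partial_sum h \<omega> n\<bar> \<partial>M) \<le> (\<integral>\<omega>. ?A \<omega> + \<bar>real n * trunc_mean t\<bar> + ?E \<omega> \<partial>M)"
  proof (rule integral_mono)
    show "\<bar>partial_sum h \<omega> n\<bar> \<le> ?A \<omega> + \<bar>real n * trunc_mean t\<bar> + ?E \<omega>" for \<omega>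
      unfolding partial_sum_decompose[of \<omega> n t] by linarith
  qed (use int_A int_E integrable_partial_sum in auto)
  also have "\<dots> = (\<integral>\<omega>. ?A \<omega> \<partial>M) + \<bar>real n * trunc_mean t\<bar> + (\<integral>\<omega>. ?E \<omega> \<partial>M)"
    using int_A int_E by (simp add: prob_space)
  also have "\<dots> \<le> t * sqrt (moment * (1 + ln (real n))) + t * moment + t * moment"
  proof (intro add_mono)
    have "(\<integral>\<omega>. ?A \<omega> \<partial>M) \<le> sqrt (moment * t powr (2 - p) * (real n * (1 + ln (real n))))"
      by (rule integral_abs_partial_sum_trunc_centered_le[OF n t])
    also have "moment * t powr (2 - p) * (real n * (1 + ln (real n))) = t\<^sup>2 * (moment * (1 + ln (real n)))"
      by (simp add: n_t2[symmetric] algebra_simps)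
    finally show "(\<integral>\<omega>. ?A \<omega> \<partial>M) \<le> t * sqrt (moment * (1 + ln (real n)))"
      using t by (simp add: real_sqrt_mult)
    have "\<bar>real n * trunc_mean t\<bar> \<le> real n * (moment * t powr (1 - p))"
      using abs_trunc_mean_le_moment[OF t] by (simp add: abs_mult mult_left_mono)
    then show "\<bar>real n * trunc_mean t\<bar> \<le> t * moment"
      unfolding n_mean .
    show "(\<integral>\<omega>. ?E \<omega> \<partial>M) \<le> t * moment"
      using integral_abs_partial_sum_excess_le[OF t, of n] unfolding n_mean .
  qed
  finally show ?thesis by (simp add: t_def algebra_simps)
qed

end

context srrw_observable
begin

lemma AE_partial_sum_rate:
  assumes \<nu>: "0 < \<nu>" "\<nu> < 1 - 1 / p"
  shows "AE \<omega> in M. (\<lambda>n. real n powr \<nu> * \<bar>partial_sum h \<omega> n\<bar> / real n) \<longlonglongrightarrow> 0"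
proof -
  define v where "v = (\<nu> + (1 - 1 / p)) / 2"
  have v: "0 < v" "v < 1 - 1 / p" "\<nu> < v" using \<nu> by (auto simp: v_def)
  show ?thesis
    using AE_abs_partial_sum_le[OF v(1,2)]
  proof eventually_elim
    case (elim \<omega>)
    let ?b = "\<lambda>n. real n powr (\<nu> - v) + moment * real n powr (\<nu> + 1 / p - 1)"
    show ?case
    proof (rule Lim_null_comparison)
      show "?b \<longlonglongrightarrow> 0"
        using tendsto_add[OF tendsto_real_powr_neg tendsto_mult_right_zero[OF tendsto_real_powr_neg]] v \<nu> by simp
      show "eventually (\<lambda>n. norm (real n powr \<nu> * \<bar>partial_sum h \<omega> n\<bar> / real n) \<le> ?b n) sequentially"
        using elim eventually_gt_at_top[of 0]
      proof eventually_elim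
        case (elim n)
        then have "real n powr \<nu> * \<bar>partial_sum h \<omega> n\<bar> / real n \<le>
            real n powr \<nu> * (real n powr (1 - v) + moment * real n powr (1 / p)) / real n"
          by (intro divide_right_mono mult_left_mono) auto
        also have "\<dots> = real n powr \<nu> * real n powr (1 - v) / real n
            + moment * (real n powr \<nu> * real n powr (1 / p) / real n)"
          by (simp add: algebra_simps add_divide_distrib)
        also have "\<dots> = ?b n"
          using elim by (simp add: powr_mult_powr_divide_self)
        finally show ?case by simp
      qed
    qed
  qed
qed

lemma nn_integral_partial_sum_rate:
  assumes \<nu>: "\<nu> < 1 - 1 / p"
  shows "(\<lambda>n. \<integral>\<^sup>+\<omega>. ennreal (real n powr \<nu> * \<bar>partial_sum h \<omega> n\<bar> / real n) \<partial>M) \<longlonglongrightarrow> 0"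
proof -
  let ?e = "1 - 1 / p - \<nu>"
  let ?b = "\<lambda>n. sqrt moment * (real n powr (- ?e) * sqrt (1 + ln (real n))) + 2 * moment * real n powr (- ?e)"
  have "(\<lambda>n::nat. real n powr (- ?e) * sqrt (1 + ln (real n))) \<longlonglongrightarrow> 0"
    using \<nu> by real_asymp
  then have "?b \<longlonglongrightarrow> 0"
    using tendsto_add[OF tendsto_mult_right_zero tendsto_mult_right_zero[OF tendsto_real_powr_neg[of "- ?e"]]] \<nu>
    by simp
  show ?thesis
  proof (rule tendsto_sandwich[OF _ _ tendsto_const])
    show "(\<lambda>n. ennreal (?b n)) \<longlonglongrightarrow> 0"
      using tendsto_ennrealI[OF \<open>?b \<longlonglongrightarrow> 0\<close>] by simp
    show "eventually (\<lambda>n. (\<integral>\<^sup>+\<omega>. ennreal (real n powr \<nu> * \<bar>partial_sum h \<omega> n\<bar> / real n) \<partial>M)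
        \<le> ennreal (?b n)) sequentially"
      using eventually_ge_at_top[of "1::nat"]
    proof eventually_elim
      case (elim n)
      have "(\<integral>\<^sup>+\<omega>. ennreal (real n powr \<nu> * \<bar>partial_sum h \<omega> n\<bar> / real n) \<partial>M) =
          ennreal (real n powr \<nu> / real n * (\<integral>\<omega>. \<bar>partial_sum h \<omega> n\<bar> \<partial>M))"
        using integrable_partial_sum by (subst nn_integral_eq_integral) auto
      also have "\<dots> \<le> ennreal (real n powr \<nu> / real n *
          (real n powr (1 / p) * (sqrt (moment * (1 + ln (real n))) + 2 * moment)))"
        using integral_abs_partial_sum_le[OF elim] by (intro ennreal_leI mult_left_mono) auto
      also have "\<dots> = ennreal (?b n)"
      proof -
        let ?Z = "sqrt (moment * (1 + ln (real n))) + 2 * moment"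
        have "real n powr \<nu> / real n * real n powr (1 / p) = real n powr (- ?e)"
          using elim powr_mult_powr_divide_self[of "real n" \<nu> "1 / p"] by (simp add: algebra_simps)
        then have "real n powr \<nu> / real n * (real n powr (1 / p) * ?Z) = real n powr (- ?e) * ?Z"
          by (simp only: mult.assoc[symmetric])
        also have "\<dots> = ?b n" by (simp only: real_sqrt_mult) (simp add: algebra_simps)
        finally show ?thesis by simp
      qed
      finally show ?case .
    qed
  qed simp
qed

end

context srrw_process
begin

lemma Delta_Xanc_eq_partial_sum:
  assumes "1 \<le> n"
  shows "Delta \<mu> Xanc g n \<omega> = partial_sum (\<lambda>x. g x - (\<integral>x. g x \<partial>\<mu>)) \<omega> n / real n"
proof -
  have "{1..n} = {0<..n}" by auto
  then have "(\<Sum>i = 1..n. g (Xanc i \<omega>)) = partial_sum (\<lambda>x. g x - (\<integral>x. g x \<partial>\<mu>)) \<omega> n + real n * (\<integral>x. g x \<partial>\<mu>)"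
    by (simp add: partial_sum_def sum_subtractf)
  then show ?thesis using assms by (simp add: Delta_def field_simps)
qed

lemma AE_Delta_eq_Delta_Xanc: "AE \<omega> in M. \<forall>n g. Delta \<mu> X g n \<omega> = Delta \<mu> Xanc g n \<omega>"
  using X_eq_Xanc by eventually_elim (auto simp: Delta_def intro!: sum.cong)

lemma measurable_Delta_Xanc [measurable]:
  "g \<in> borel_measurable borel \<Longrightarrow> (\<lambda>\<omega>. Delta \<mu> Xanc g n \<omega>) \<in> borel_measurable M"
  unfolding Delta_def by (intro borel_measurable_diff borel_measurable_divide borel_measurable_sum
      measurable_compose[OF measurable_Xanc]) auto

lemma Delta_Xanc_rate:
  fixes g :: "real ^ 'd \<Rightarrow> real"
  assumes "\<alpha> \<le> 1/2" and g: "g \<in> borel_measurable borel" "integrable \<mu> (\<lambda>x. \<bar>g x\<bar> powr p)"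
    and p: "1 < p" "p \<le> 2" and \<nu>: "0 < \<nu>" "\<nu> < 1 - 1 / p"
  shows "AE \<omega> in M. (\<lambda>n. real n powr \<nu> * \<bar>Delta \<mu> Xanc g n \<omega>\<bar>) \<longlonglongrightarrow> 0"
    and "(\<lambda>n. \<integral>\<^sup>+\<omega>. ennreal (real n powr \<nu> * \<bar>Delta \<mu> Xanc g n \<omega>\<bar>) \<partial>M) \<longlonglongrightarrow> 0"
proof -
  have g_step: "g \<in> borel_measurable \<mu>" using g(1) by (simp add: measurable_step_eq_borel)
  have "integrable \<mu> g"
  proof (rule Bochner_Integration.integrable_bound[OF _ g_step])
    show "integrable \<mu> (\<lambda>x. 1 + \<bar>g x\<bar> powr p)" using g(2) by simp
    show "AE x in \<mu>. norm (g x) \<le> norm (1 + \<bar>g x\<bar> powr p)"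
      using powr_le_one_plus_powr[of 1 p] p by (intro AE_I2) simp
  qed
  define c where "c = (\<integral>x. g x \<partial>\<mu>)"
  have centered_powr: "integrable \<mu> (\<lambda>x. \<bar>g x - c\<bar> powr p)"
  proof (rule Bochner_Integration.integrable_bound)
    show "integrable \<mu> (\<lambda>x. 2 powr p * (\<bar>g x\<bar> powr p + \<bar>c\<bar> powr p))" using g(2) by simp
    show "AE x in \<mu>. norm (\<bar>g x - c\<bar> powr p) \<le> norm (2 powr p * (\<bar>g x\<bar> powr p + \<bar>c\<bar> powr p))"
      using abs_diff_powr_le[of p] p by (intro AE_I2) simp
  qed (use g_step in simp)
  interpret observable: srrw_observable M \<mu> \<alpha> Y X \<xi> U "\<lambda>x. g x - c" p
  proof (unfold_locales)
    show "integrable \<mu> (\<lambda>x. g x - c)" using \<open>integrable \<mu> g\<close> by simp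
    show "(\<integral>x. g x - c \<partial>\<mu>) = 0" using \<open>integrable \<mu> g\<close> by (simp add: c_def step.prob_space)
  qed (use assms centered_powr in simp_all)
  have eq: "eventually (\<lambda>n. real n powr \<nu> * \<bar>partial_sum (\<lambda>x. g x - c) \<omega> n\<bar> / real n =
      real n powr \<nu> * \<bar>Delta \<mu> Xanc g n \<omega>\<bar>) sequentially" for \<omega>
    using eventually_ge_at_top[of 1] by eventually_elim (simp add: Delta_Xanc_eq_partial_sum c_def)
  show "AE \<omega> in M. (\<lambda>n. real n powr \<nu> * \<bar>Delta \<mu> Xanc g n \<omega>\<bar>) \<longlonglongrightarrow> 0"
    using observable.AE_partial_sum_rate[OF \<nu>] by eventually_elim (rule Lim_transform_eventually[OF _ eq])
  show "(\<lambda>n. \<integral>\<^sup>+\<omega>. ennreal (real n powr \<nu> * \<bar>Delta \<mu> Xanc g n \<omega>\<bar>) \<partial>M) \<longlonglongrightarrow> 0"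
  proof (rule Lim_transform_eventually[OF observable.nn_integral_partial_sum_rate[OF \<nu>(2)]])
    show "eventually (\<lambda>n. (\<integral>\<^sup>+\<omega>. ennreal (real n powr \<nu> * \<bar>partial_sum (\<lambda>x. g x - c) \<omega> n\<bar> / real n) \<partial>M) =
        (\<integral>\<^sup>+\<omega>. ennreal (real n powr \<nu> * \<bar>Delta \<mu> Xanc g n \<omega>\<bar>) \<partial>M)) sequentially"
      using eventually_ge_at_top[of 1]
      by eventually_elim (simp add: Delta_Xanc_eq_partial_sum c_def)
  qed
qed

lemma Delta_rate_sum:
  fixes g :: "'k \<Rightarrow> real ^ 'd \<Rightarrow> real"
  assumes "finite K" "\<alpha> \<le> 1/2"
    and g: "\<And>k. k \<in> K \<Longrightarrow> g k \<in> borel_measurable borel" "\<And>k. k \<in> K \<Longrightarrow> integrable \<mu> (\<lambda>x. \<bar>g k x\<bar> powr p)"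
    and p: "1 < p" "p \<le> 2" and \<nu>: "0 < \<nu>" "\<nu> < 1 - 1 / p"
  shows "AE \<omega> in M. (\<lambda>n. real n powr \<nu> * (\<Sum>k\<in>K. \<bar>Delta \<mu> X (g k) n \<omega>\<bar>)) \<longlonglongrightarrow> 0"
    and "(\<lambda>n. \<integral>\<^sup>+\<omega>. ennreal (real n powr \<nu> * (\<Sum>k\<in>K. \<bar>Delta \<mu> X (g k) n \<omega>\<bar>)) \<partial>M) \<longlonglongrightarrow> 0"
proof -
  note rate = Delta_Xanc_rate[OF assms(2) g p \<nu>]
  have AE_eq: "AE \<omega> in M. \<forall>n. real n powr \<nu> * (\<Sum>k\<in>K. \<bar>Delta \<mu> X (g k) n \<omega>\<bar>) =
      (\<Sum>k\<in>K. real n powr \<nu> * \<bar>Delta \<mu> Xanc (g k) n \<omega>\<bar>)"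
    using AE_Delta_eq_Delta_Xanc by eventually_elim (simp add: sum_distrib_left)
  have "AE \<omega> in M. \<forall>k\<in>K. (\<lambda>n. real n powr \<nu> * \<bar>Delta \<mu> Xanc (g k) n \<omega>\<bar>) \<longlonglongrightarrow> 0"
    using assms(1) rate(1) by (rule AE_finite_allI)
  then show "AE \<omega> in M. (\<lambda>n. real n powr \<nu> * (\<Sum>k\<in>K. \<bar>Delta \<mu> X (g k) n \<omega>\<bar>)) \<longlonglongrightarrow> 0"
    using AE_eq
  proof eventually_elim
    case (elim \<omega>)
    have "(\<lambda>n. \<Sum>k\<in>K. real n powr \<nu> * \<bar>Delta \<mu> Xanc (g k) n \<omega>\<bar>) \<longlonglongrightarrow> (\<Sum>k\<in>K. 0)"
      using elim(1) by (intro tendsto_sum) auto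
    then show ?case using elim(2) by simp
  qed
  have "(\<lambda>n. \<Sum>k\<in>K. \<integral>\<^sup>+\<omega>. ennreal (real n powr \<nu> * \<bar>Delta \<mu> Xanc (g k) n \<omega>\<bar>) \<partial>M) \<longlonglongrightarrow> 0"
    using tendsto_sum[OF rate(2)] by simp
  moreover have "(\<integral>\<^sup>+\<omega>. ennreal (real n powr \<nu> * (\<Sum>k\<in>K. \<bar>Delta \<mu> X (g k) n \<omega>\<bar>)) \<partial>M) =
      (\<Sum>k\<in>K. \<integral>\<^sup>+\<omega>. ennreal (real n powr \<nu> * \<bar>Delta \<mu> Xanc (g k) n \<omega>\<bar>) \<partial>M)" for n
  proof -
    have "(\<integral>\<^sup>+\<omega>. ennreal (real n powr \<nu> * (\<Sum>k\<in>K. \<bar>Delta \<mu> X (g k) n \<omega>\<bar>)) \<partial>M) =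
        (\<integral>\<^sup>+\<omega>. (\<Sum>k\<in>K. ennreal (real n powr \<nu> * \<bar>Delta \<mu> Xanc (g k) n \<omega>\<bar>)) \<partial>M)"
      using AE_eq by (intro nn_integral_cong_AE) auto
    also have "\<dots> = (\<Sum>k\<in>K. \<integral>\<^sup>+\<omega>. ennreal (real n powr \<nu> * \<bar>Delta \<mu> Xanc (g k) n \<omega>\<bar>) \<partial>M)"
      using g(1) by (intro nn_integral_sum) auto
    finally show ?thesis .
  qed
  ultimately show "(\<lambda>n. \<integral>\<^sup>+\<omega>. ennreal (real n powr \<nu> * (\<Sum>k\<in>K. \<bar>Delta \<mu> X (g k) n \<omega>\<bar>)) \<partial>M) \<longlonglongrightarrow> 0"
    by simp
qed

end

section \<open>The second-order observables\<close>

fun second_order_observable :: "real \<Rightarrow> bool + 'd \<times> 'd \<Rightarrow> real ^ 'd \<Rightarrow> real" where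
  "second_order_observable \<delta> (Inl True) = (\<lambda>x. norm x powr 2)"
| "second_order_observable \<delta> (Inl False) = (\<lambda>x. norm x powr (2 + \<delta> / 2))"
| "second_order_observable \<delta> (Inr (i, j)) = (\<lambda>x. x $ i * x $ j)"

lemma measurable_second_order_observable [measurable]:
  "second_order_observable \<delta> k \<in> borel_measurable borel"
  by (induction \<delta> k rule: second_order_observable.induct)
    (auto intro!: borel_measurable_continuous_onI continuous_intros)

lemma sum_second_order_observables:
  fixes F :: "bool + 'd::finite \<times> 'd \<Rightarrow> real"
  shows "(\<Sum>k\<in>UNIV. F k) = F (Inl True) + F (Inl False) + (\<Sum>(i, j)\<in>UNIV. F (Inr (i, j)))"
proof -
  have "(\<Sum>k\<in>UNIV. F k) = (\<Sum>k\<in>UNIV <+> UNIV. F k)" by simp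
  also have "\<dots> = (\<Sum>b\<in>UNIV. F (Inl b)) + (\<Sum>ij\<in>UNIV. F (Inr ij))" by (subst sum.Plus) (simp_all add: comp_def)
  finally show ?thesis by (simp add: UNIV_bool case_prod_beta)
qed

lemma Max_Delta_le_sum_second_order_observables:
  "Max {\<bar>Delta \<mu> X (\<lambda>x. norm x powr 2) n \<omega>\<bar>, \<bar>Delta \<mu> X (\<lambda>x. norm x powr (2 + \<delta> / 2)) n \<omega>\<bar>,
      Delta_cov_frob \<mu> X n \<omega>}
    \<le> (\<Sum>k\<in>UNIV. \<bar>Delta \<mu> X (second_order_observable \<delta> k) n \<omega>\<bar>)"
proof -
  have "Delta_cov_frob \<mu> X n \<omega> \<le> (\<Sum>(i, j)\<in>UNIV. \<bar>Delta \<mu> X (\<lambda>x. x $ i * x $ j) n \<omega>\<bar>)"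
    unfolding Delta_cov_frob_def by (rule sqrt_sum_squares_le_sum_abs)
  moreover have "0 \<le> (\<Sum>(i, j)\<in>UNIV. \<bar>Delta \<mu> X (\<lambda>x. x $ i * x $ j) n \<omega>\<bar>)"
    by (intro sum_nonneg) auto
  ultimately show ?thesis
    by (simp add: sum_second_order_observables)
qed

lemma (in srrw_process) integrable_second_order_observable_powr:
  assumes "0 < \<delta>" and moment: "integrable \<mu> (\<lambda>x. norm x powr (2 + \<delta>))"
  shows "integrable \<mu> (\<lambda>x. \<bar>second_order_observable \<delta> k x\<bar> powr ((4 + 2 * \<delta>) / (4 + \<delta>)))"
proof (rule Bochner_Integration.integrable_bound)
  define p where "p = (4 + 2 * \<delta>) / (4 + \<delta>)"
  have p: "1 < p" "2 * p \<le> 2 + \<delta>" "(2 + \<delta> / 2) * p = 2 + \<delta>"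
    using assms(1) by (simp_all add: p_def field_simps)
  show "integrable \<mu> (\<lambda>x. 1 + norm x powr (2 + \<delta>))" using moment by simp
  have "\<bar>second_order_observable \<delta> k x\<bar> powr p \<le> 1 + norm x powr (2 + \<delta>)" for x
  proof (cases "k = Inl False")
    case True
    then show ?thesis using p(3) by (simp add: powr_powr)
  next
    case False
    have "\<bar>second_order_observable \<delta> k x\<bar> \<le> norm x powr 2"
      using False
      by (induction \<delta> k rule: second_order_observable.induct)
        (auto simp: abs_mult power2_eq_square intro!: mult_mono component_le_norm_cart)
    then have "\<bar>second_order_observable \<delta> k x\<bar> powr p \<le> (norm x powr 2) powr p"
      using p by (intro powr_mono2) auto
    also have "\<dots> = norm x powr (2 * p)" by (rule powr_powr)
    also have "\<dots> \<le> 1 + norm x powr (2 + \<delta>)"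
      using p by (intro powr_le_one_plus_powr) auto
    finally show ?thesis .
  qed
  then show "AE x in \<mu>. norm (\<bar>second_order_observable \<delta> k x\<bar> powr ((4 + 2 * \<delta>) / (4 + \<delta>)))
      \<le> norm (1 + norm x powr (2 + \<delta>))"
    by (simp add: p_def)
qed (simp add: measurable_step_eq_borel)

theorem corollary3p5:
  fixes M :: "'a measure" and \<mu> :: "(real ^ 'd) measure" and \<alpha> \<delta> :: real
    and Y X :: "nat \<Rightarrow> 'a \<Rightarrow> real ^ 'd" and \<xi> :: "nat \<Rightarrow> 'a \<Rightarrow> bool" and U :: "nat \<Rightarrow> 'a \<Rightarrow> nat"
  assumes S: "srrw M \<mu> \<alpha> Y \<xi> U X"
    and \<alpha>: "0 \<le> \<alpha>" "\<alpha> \<le> 1/2"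
    and nondeg: "\<mu> \<noteq> return borel 0"
    and \<delta>: "\<delta> > 0"
    and mom: "integrable \<mu> (\<lambda>x. norm x powr (2 + \<delta>))"
    and mean0: "(\<integral>x. x \<partial>\<mu>) = 0"
  shows "\<forall>\<nu>. 0 < \<nu> \<and> \<nu> < \<delta> / (4 + 2 * \<delta>) \<longrightarrow>
     (let D = (\<lambda>n \<omega>. real n powr \<nu> *
                 Max {\<bar>Delta \<mu> X (\<lambda>x. norm x powr 2) n \<omega>\<bar>,
                      \<bar>Delta \<mu> X (\<lambda>x. norm x powr (2 + \<delta> / 2)) n \<omega>\<bar>,
                      Delta_cov_frob \<mu> X n \<omega>})
      in (AE \<omega> in M. (\<lambda>n. D n \<omega>) \<longlonglongrightarrow> 0) \<and>
         (\<lambda>n. \<integral>\<^sup>+ \<omega>. ennreal (D n \<omega>) \<partial>M) \<longlonglongrightarrow> 0)"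
proof (intro allI impI)
  fix \<nu> :: real assume \<nu>: "0 < \<nu> \<and> \<nu> < \<delta> / (4 + 2 * \<delta>)"
  interpret srrw_process M \<mu> \<alpha> Y X \<xi> U by (rule srrw_process.intro[OF S])
  define p where "p = (4 + 2 * \<delta>) / (4 + \<delta>)"
  have p: "1 < p" "p \<le> 2" "\<nu> < 1 - 1 / p" using \<delta> \<nu> by (auto simp: p_def field_simps)
  have "integrable \<mu> (\<lambda>x. \<bar>second_order_observable \<delta> k x\<bar> powr p)" if "k \<in> UNIV" for k
    using integrable_second_order_observable_powr[OF \<delta> mom] by (simp add: p_def)
  note rate = Delta_rate_sum[where K=UNIV and g="second_order_observable \<delta>",
      OF finite \<alpha>(2) measurable_second_order_observable this p(1,2) conjunct1[OF \<nu>] p(3)]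
  show "let D = (\<lambda>n \<omega>. real n powr \<nu> *
                 Max {\<bar>Delta \<mu> X (\<lambda>x. norm x powr 2) n \<omega>\<bar>,
                      \<bar>Delta \<mu> X (\<lambda>x. norm x powr (2 + \<delta> / 2)) n \<omega>\<bar>,
                      Delta_cov_frob \<mu> X n \<omega>})
      in (AE \<omega> in M. (\<lambda>n. D n \<omega>) \<longlonglongrightarrow> 0) \<and> (\<lambda>n. \<integral>\<^sup>+ \<omega>. ennreal (D n \<omega>) \<partial>M) \<longlonglongrightarrow> 0"
    unfolding Let_def
    by (intro conjI AE_and_nn_integral_null_comparison[OF _ _ rate]
        mult_left_mono[OF Max_Delta_le_sum_second_order_observables]) auto
qed

end
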